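(* Suppose the Markov chain $\Xi$ on $\mathbb X\subseteq\mathbb R$ satisfies $(\mathrm T^{\mathrm{out}}_{\alpha,\beta,c})$. Then for every $\nu$ with $\alpha-\beta<\nu<\alpha$: as $x\to+\infty$, $D_1(x)=\nu x^{\nu-1}\mathbb E_x[\theta]+c\nu x^{\nu-\alpha}\kappa_0(\nu)+o(x^{\nu-\alpha})$; and as $x\to\pm\infty$, $$D_2(x)=\nu\,\mathrm{sign}(x)|x|^{\nu-1}\mathbb E_x[\theta]+c\nu|x|^{\nu-\alpha}\kappa_0(\nu)+o(|x|^{\nu-\alpha}),$$ where $\kappa_0(\nu):=(1-\nu)\frac{\Gamma(\alpha-\nu)\Gamma(1-\alpha)}{\Gamma(2-\nu)}$.
   Context: $\theta:=\xi_1-\xi_0$; $\mathbb P_x,\mathbb E_x$ refer to the chain started at $x$; $y_+:=y\mathbf 1\{y\ge0\}$, $y_-:=-y\mathbf 1\{y<0\}$. For $\nu\in\mathbb R$: $f_1^\nu(x)=x^\nu$ for $x\ge1$ and $=1$ for $x<1$; $f_2^\nu(x)=|x|^\nu$ for $|x|\ge1$ and $=1$ for $|x|<1$; $D_i(x):=\mathbb E[f_i^\nu(\xi_{n+1})-f_i^\nu(\xi_n)\mid\xi_n=x]$. $(\mathrm T^{\mathrm{out}}_{\alpha,\beta,c})$: there exist $\alpha\in(1,2)$, $\beta>\alpha$, $c>0$, $x_0\in\mathbb R_+$ with $\lim_{y\to\infty}\sup_{x\ge x_0}|y^\alpha\mathbb P_x[\theta_+>y]-c|=\lim_{y\to\infty}\sup_{x\le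 -x_0}|y^\alpha\mathbb P_x[\theta_->y]-c|=0$, $\sup_{x\ge x_0}\mathbb E_x[\theta_-^\beta]<\infty$, $\sup_{x\le-x_0}\mathbb E_x[\theta_+^\beta]<\infty$. *)

theory Defs
  imports "HOL-Probability.Probability" "HOL-Library.Landau_Symbols"
begin

(* A time-homogeneous Markov chain on X \<subseteq> \<real> is represented by its one-step
   transition kernel K: for x \<in> X, K x is the law of \<xi>_{n+1} given \<xi>_n = x.
   Under P_x, \<theta> = \<xi>_1 - \<xi>_0 is the image of K x under (\<lambda>z. z - x). *)

definition pospart :: "real \<Rightarrow> real" where
  "pospart y = (if y \<ge> 0 then y else 0)"

definition negpart :: "real \<Rightarrow> real" where
  "negpart y = (if y < 0 then - y else 0)"

definition f1 :: "real \<Rightarrow> real \<Rightarrow> real" where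
  "f1 \<nu> x = (if x \<ge> 1 then x powr \<nu> else 1)"

definition f2 :: "real \<Rightarrow> real \<Rightarrow> real" where
  "f2 \<nu> x = (if \<bar>x\<bar> \<ge> 1 then \<bar>x\<bar> powr \<nu> else 1)"

definition drift :: "(real \<Rightarrow> real measure) \<Rightarrow> real \<Rightarrow> real" where
  "drift K x = (\<integral> z. (z - x) \<partial>K x)"

definition D1 :: "(real \<Rightarrow> real measure) \<Rightarrow> real \<Rightarrow> real \<Rightarrow> real" where
  "D1 K \<nu> x = (\<integral> z. (f1 \<nu> z - f1 \<nu> x) \<partial>K x)"

definition D2 :: "(real \<Rightarrow> real measure) \<Rightarrow> real \<Rightarrow> real \<Rightarrow> real" where
  "D2 K \<nu> x = (\<integral> z. (f2 \<nu> z - f2 \<nu> x) \<partial>K x)"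

definition kappa0 :: "real \<Rightarrow> real \<Rightarrow> real" where
  "kappa0 \<alpha> \<nu> = (1 - \<nu>) * Gamma (\<alpha> - \<nu>) * Gamma (1 - \<alpha>) / Gamma (2 - \<nu>)"

definition markov_kernel_on :: "real set \<Rightarrow> (real \<Rightarrow> real measure) \<Rightarrow> bool" where
  "markov_kernel_on X K \<longleftrightarrow>
     (\<forall>x\<in>X. prob_space (K x) \<and> sets (K x) = sets borel \<and> (AE z in K x. z \<in> X))"

(* Condition (T^out_{\<alpha>,\<beta>,c}); the uniform limits
   lim_{y\<to>\<infinity>} sup_{x} |y^\<alpha> P_x[...] - c| = 0 are written in \<epsilon>-form. *)
definition T_out :: "real set \<Rightarrow> (real \<Rightarrow> real measure) \<Rightarrow> real \<Rightarrow> real \<Rightarrow> real \<Rightarrow> bool" where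
  "T_out X K \<alpha> \<beta> c \<longleftrightarrow>
     1 < \<alpha> \<and> \<alpha> < 2 \<and> \<beta> > \<alpha> \<and> c > 0 \<and>
     (\<exists>x0 \<ge> 0.
        (\<forall>\<epsilon>>0. \<forall>\<^sub>F y in at_top. \<forall>x\<in>X. x \<ge> x0 \<longrightarrow>
            \<bar>y powr \<alpha> * measure (K x) {z. pospart (z - x) > y} - c\<bar> \<le> \<epsilon>) \<and>
        (\<forall>\<epsilon>>0. \<forall>\<^sub>F y in at_top. \<forall>x\<in>X. x \<le> - x0 \<longrightarrow>
            \<bar>y powr \<alpha> * measure (K x) {z. negpart (z - x) > y} - c\<bar> \<le> \<epsilon>) \<and>
        (\<exists>B::real. \<forall>x\<in>X. x \<ge> x0 \<longrightarrow>
            (\<integral>\<^sup>+ z. ennreal (negpart (z - x) powr \<beta>) \<partial>K x) \<le> ennreal B) \<and>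
        (\<exists>B::real. \<forall>x\<in>X. x \<le> - x0 \<longrightarrow>
            (\<integral>\<^sup>+ z. ennreal (pospart (z - x) powr \<beta>) \<partial>K x) \<le> ennreal B))"

end

theory Submission
  imports Defs
begin

text \<open>
  Write \<open>\<theta>\<close> for the jump from \<open>x\<close> and \<open>F\<close> for \<open>f1 \<nu>\<close> or \<open>f2 \<nu>\<close>. Taylor's formula splits
  \<open>F (x + \<theta>) - F x\<close> into the linear term \<open>\<nu> x\<^sup>\<nu>\<^sup>-\<^sup>1 \<theta>\<close>, a second order term
  \<open>\<nu> (\<nu> - 1) x\<^sup>\<nu> G (\<theta>\<^sup>+ / x)\<close> for upward jumps, and a remainder for downward jumps.

  Since \<open>G v = \<integral>\<^sub>0\<^sup>v W\<close> with \<open>W u = \<integral>\<^sub>0\<^sup>u (1 + w)\<^sup>\<nu>\<^sup>-\<^sup>2 dw\<close>, Fubini gives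
  \<open>x\<^sup>\<alpha> E G (\<theta>\<^sup>+ / x) = \<integral>\<^sub>0\<^sup>\<infinity> W u u\<^sup>-\<^sup>\<alpha> (x u)\<^sup>\<alpha> P (\<theta> > x u) du\<close>, and the uniform tail
  asymptotics turn this into \<open>c \<integral>\<^sub>0\<^sup>\<infinity> W u u\<^sup>-\<^sup>\<alpha> du\<close>, a Beta integral equal to
  \<open>c \<Gamma>(2 - \<alpha>) \<Gamma>(\<alpha> - \<nu>) / ((\<alpha> - 1) \<Gamma>(2 - \<nu>))\<close>; multiplied by \<open>\<nu> (\<nu> - 1)\<close> this is \<open>c \<nu> \<kappa>\<^sub>0(\<nu>)\<close>.

  A downward jump with \<open>|\<theta>| \<le> x/2\<close> costs \<open>O (x\<^sup>\<nu>\<^sup>-\<^sup>\<gamma> |\<theta>|\<^sup>\<gamma>)\<close> with \<open>\<gamma> = min \<beta> 2\<close> by the second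
  order Taylor bound, a larger one is paid for by the \<open>\<beta>\<close>-th moment; both contributions are
  \<open>o (x\<^sup>\<nu>\<^sup>-\<^sup>\<alpha>)\<close> because \<open>\<gamma> > \<alpha>\<close> and \<open>\<beta> + \<nu> > \<alpha>\<close>. The negative half-line is the mirror image.
\<close>

section \<open>Gamma and Beta integrals\<close>

lemma nn_integral_Gamma_scaled:
  fixes p l :: real assumes p: "p > 0" and l: "l > 0"
  shows "(\<integral>\<^sup>+t. ennreal (indicator {0..} t * t powr (p - 1) / exp (l * t)) \<partial>lborel)
         = ennreal (Gamma p / l powr p)"
proof -
  have "ennreal (Gamma p) = (\<integral>\<^sup>+t. ennreal (indicator {0..} t * t powr (p - 1) / exp t) \<partial>lborel)"
    using Gamma_conv_nn_integral_real[OF p] by simp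
  also have "\<dots> = ennreal \<bar>l\<bar> * (\<integral>\<^sup>+r. ennreal (indicator {0..} (0 + l * r) * (0 + l * r) powr (p - 1) / exp (0 + l * r)) \<partial>lborel)"
    by (rule nn_integral_real_affine) (use l in auto)
  also have "\<dots> = ennreal \<bar>l\<bar> * (\<integral>\<^sup>+r. ennreal (l powr (p - 1)) * ennreal (indicator {0..} r * r powr (p - 1) / exp (l * r)) \<partial>lborel)"
    using l by (intro arg_cong2[where f="(*)"] refl nn_integral_cong)
       (auto simp: indicator_def powr_mult ennreal_mult'[symmetric] zero_le_mult_iff)
  also have "\<dots> = ennreal (l * l powr (p - 1)) * (\<integral>\<^sup>+r. ennreal (indicator {0..} r * r powr (p - 1) / exp (l * r)) \<partial>lborel)"
    using l by (subst nn_integral_cmult) (auto simp: ennreal_mult mult.assoc)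
  also have "l * l powr (p - 1) = l powr p" using l by (simp add: powr_diff)
  finally have "ennreal (Gamma p) = ennreal (l powr p) * (\<integral>\<^sup>+r. ennreal (indicator {0..} r * r powr (p - 1) / exp (l * r)) \<partial>lborel)" .
  then have "ennreal (Gamma p) / ennreal (l powr p) = (\<integral>\<^sup>+r. ennreal (indicator {0..} r * r powr (p - 1) / exp (l * r)) \<partial>lborel)"
    using l by (subst ennreal_mult_divide_eq[symmetric]) (auto simp: mult.commute)
  then show ?thesis using l p Gamma_real_pos[OF p] by (simp add: divide_ennreal)
qed

lemma nn_integral_Gamma_mixture:
  fixes a b :: real assumes a: "a > 0" and b: "b > 0"
  shows "(\<integral>\<^sup>+t. \<integral>\<^sup>+w. ennreal (indicator {0..} w * w powr (a - 1) *
            (indicator {0..} t * t powr (a + b - 1) / exp ((1 + w) * t))) \<partial>lborel \<partial>lborel)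
         = ennreal (Gamma a * Gamma b)"
proof -
  have "(\<integral>\<^sup>+t. \<integral>\<^sup>+w. ennreal (indicator {0..} w * w powr (a - 1) *
            (indicator {0..} t * t powr (a + b - 1) / exp ((1 + w) * t))) \<partial>lborel \<partial>lborel)
      = (\<integral>\<^sup>+t. ennreal (indicator {0<..} t * t powr (a + b - 1) / exp t) *
            (\<integral>\<^sup>+w. ennreal (indicator {0..} w * w powr (a - 1) / exp (t * w)) \<partial>lborel) \<partial>lborel)"
  proof (intro nn_integral_cong_AE eventually_mono[OF AE_lborel_singleton[of 0]])
    fix t :: real assume "t \<noteq> 0"
    then show "(\<integral>\<^sup>+w. ennreal (indicator {0..} w * w powr (a - 1) *
                  (indicator {0..} t * t powr (a + b - 1) / exp ((1 + w) * t))) \<partial>lborel) =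
       ennreal (indicator {0<..} t * t powr (a + b - 1) / exp t) *
         (\<integral>\<^sup>+w. ennreal (indicator {0..} w * w powr (a - 1) / exp (t * w)) \<partial>lborel)"
      by (subst nn_integral_cmult[symmetric])
        (auto intro!: nn_integral_cong simp: ennreal_mult'[symmetric] indicator_def algebra_simps exp_add)
  qed
  also have "\<dots> = (\<integral>\<^sup>+t. ennreal (Gamma a) * ennreal (indicator {0..} t * t powr (b - 1) / exp t) \<partial>lborel)"
  proof (intro nn_integral_cong_AE eventually_mono[OF AE_lborel_singleton[of 0]])
    fix t :: real assume t0: "t \<noteq> 0"
    show "ennreal (indicator {0<..} t * t powr (a + b - 1) / exp t) *
            (\<integral>\<^sup>+w. ennreal (indicator {0..} w * w powr (a - 1) / exp (t * w)) \<partial>lborel)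
          = ennreal (Gamma a) * ennreal (indicator {0..} t * t powr (b - 1) / exp t)"
    proof (cases "t > 0")
      case True
      have "t powr (a + b - 1) / exp t * (Gamma a / t powr a) = Gamma a * (t powr (b - 1) / exp t)"
        using True by (simp add: powr_add powr_diff field_simps)
      then show ?thesis using True a nn_integral_Gamma_scaled[OF a True]
        by (simp add: ennreal_mult'[symmetric] Gamma_real_pos indicator_def)
    qed (use t0 in \<open>auto simp: indicator_def\<close>)
  qed
  also have "\<dots> = ennreal (Gamma a * Gamma b)"
    using a b by (subst nn_integral_cmult)
      (auto simp: Gamma_conv_nn_integral_real[symmetric] ennreal_mult Gamma_real_pos)
  finally show ?thesis .
qed

lemma nn_integral_Beta_second_kind:
  fixes a b :: real assumes a: "a > 0" and b: "b > 0"
  shows "(\<integral>\<^sup>+w. ennreal (indicator {0..} w * w powr (a - 1) * (1 + w) powr (-(a + b))) \<partial>lborel)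
         = ennreal (Gamma a * Gamma b / Gamma (a + b))"
proof -
  define I where "I = (\<integral>\<^sup>+w. ennreal (indicator {0..} w * w powr (a - 1) * (1 + w) powr (-(a + b))) \<partial>lborel)"
  have gab: "Gamma (a + b) > 0" using a b by (intro Gamma_real_pos) auto
  have pm: "(1 + w) powr (- a - b) = inverse ((1 + w) powr (a + b))" for w :: real
    using powr_minus[of "1 + w" "a + b"] by simp
  have "I * ennreal (Gamma (a + b))
      = (\<integral>\<^sup>+w. ennreal (indicator {0..} w * w powr (a - 1)) * ennreal (Gamma (a + b) / (1 + w) powr (a + b)) \<partial>lborel)"
    unfolding I_def using gab
    by (subst nn_integral_multc[symmetric]) (auto intro!: nn_integral_cong
        simp: ennreal_mult'[symmetric] indicator_def pm divide_inverse mult_ac)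
  also have "\<dots> = (\<integral>\<^sup>+w. ennreal (indicator {0..} w * w powr (a - 1)) *
        (\<integral>\<^sup>+t. ennreal (indicator {0..} t * t powr (a + b - 1) / exp ((1 + w) * t)) \<partial>lborel) \<partial>lborel)"
    using a b nn_integral_Gamma_scaled[of "a + b" "1 + _"]
    by (intro nn_integral_cong) (auto simp: indicator_def)
  also have "\<dots> = (\<integral>\<^sup>+w. \<integral>\<^sup>+t. ennreal (indicator {0..} w * w powr (a - 1) *
        (indicator {0..} t * t powr (a + b - 1) / exp ((1 + w) * t))) \<partial>lborel \<partial>lborel)"
    by (subst nn_integral_cmult[symmetric])
      (auto intro!: nn_integral_cong simp: ennreal_mult'[symmetric] indicator_def)
  also have "\<dots> = ennreal (Gamma a * Gamma b)"
    using nn_integral_Gamma_mixture[OF a b] by (subst lborel_pair.Fubini') (auto simp: case_prod_unfold)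
  finally have "I * ennreal (Gamma (a + b)) = ennreal (Gamma a * Gamma b)" .
  then have "I = ennreal (Gamma a * Gamma b) / ennreal (Gamma (a + b))"
    using gab by (metis ennreal_eq_0_iff ennreal_mult_divide_eq ennreal_neq_top not_less order_refl)
  then show ?thesis
    using gab a b by (simp add: I_def divide_ennreal Gamma_real_pos)
qed

lemma nn_integral_powr_tail:
  fixes w \<alpha> :: real assumes w: "w > 0" and \<alpha>: "\<alpha> > 1"
  shows "(\<integral>\<^sup>+u. ennreal (indicator {w..} u * u powr (-\<alpha>)) \<partial>lborel) = ennreal (w powr (1 - \<alpha>) / (\<alpha> - 1))"
proof -
  have "((\<lambda>x. x powr (-\<alpha>)) has_integral -(w powr (-\<alpha>+1)) / (-\<alpha>+1)) {w..}"
    using has_integral_powr_to_inf[of "-\<alpha>" w] w \<alpha> by simp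
  moreover have "-(w powr (-\<alpha>+1)) / (-\<alpha>+1) = w powr (1 - \<alpha>) / (\<alpha> - 1)"
    by (simp add: minus_divide_right)
  ultimately have "((\<lambda>x. x powr (-\<alpha>)) has_integral w powr (1 - \<alpha>) / (\<alpha> - 1)) {w..}"
    by simp
  from nn_integral_has_integral_lebesgue[OF _ this] show ?thesis using w by simp
qed

lemma nn_integral_powr_head:
  fixes d q :: real assumes d: "d \<ge> 0" and q: "q > -1"
  shows "(\<integral>\<^sup>+u. ennreal (indicator {0..d} u * u powr q) \<partial>lborel) = ennreal (d powr (q + 1) / (q + 1))"
  using nn_integral_has_integral_lebesgue[OF _ has_integral_powr_from_0[OF q d]] by simp

section \<open>Integrated Taylor remainders\<close>

text \<open>For \<open>\<nu> \<notin> {0, 1}\<close>: \<open>(1 + v)\<^sup>\<nu> = 1 + \<nu> v + \<nu> (\<nu> - 1) taylor_rem2 \<nu> v\<close>, with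
  \<open>taylor_rem2 \<nu> v = \<integral>\<^sub>0\<^sup>v taylor_rem1 \<nu>\<close> and \<open>taylor_rem1 \<nu> u = \<integral>\<^sub>0\<^sup>u (1 + w)\<^sup>\<nu>\<^sup>-\<^sup>2 dw\<close>.\<close>

definition taylor_rem1 :: "real \<Rightarrow> real \<Rightarrow> real" where
  "taylor_rem1 \<nu> u = ((1 + u) powr (\<nu> - 1) - 1) / (\<nu> - 1)"

definition taylor_rem2 :: "real \<Rightarrow> real \<Rightarrow> real" where
  "taylor_rem2 \<nu> v = ((1 + v) powr \<nu> - 1 - \<nu> * v) / (\<nu> * (\<nu> - 1))"

lemma taylor_rem1_measurable[measurable]: "taylor_rem1 \<nu> \<in> borel_measurable borel"
  unfolding taylor_rem1_def by measurable

lemma taylor_rem2_measurable[measurable]: "taylor_rem2 \<nu> \<in> borel_measurable borel"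
  unfolding taylor_rem2_def by measurable

lemma taylor_rem1_has_integral:
  assumes \<nu>: "\<nu> \<noteq> 1" and u: "u \<ge> 0"
  shows "((\<lambda>w. (1 + w) powr (\<nu> - 2)) has_integral taylor_rem1 \<nu> u) {0..u}"
proof -
  have "((\<lambda>w. (1 + w) powr (\<nu> - 2)) has_integral (taylor_rem1 \<nu> u - taylor_rem1 \<nu> 0)) {0..u}"
  proof (rule fundamental_theorem_of_calculus[OF u])
    fix x assume x: "x \<in> {0..u}"
    have "((\<lambda>w. ((1 + w) powr (\<nu> - 1) - 1) / (\<nu> - 1)) has_real_derivative
           ((\<nu> - 1) * (1 + x) powr (\<nu> - 1 - 1) * 1 - 0) / (\<nu> - 1)) (at x)"
      using x \<nu> by (intro derivative_eq_intros) auto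
    moreover have "((\<nu> - 1) * (1 + x) powr (\<nu> - 1 - 1) * 1 - 0) / (\<nu> - 1) = (1 + x) powr (\<nu> - 2)"
      using \<nu> by (simp add: field_simps)
    ultimately have "(taylor_rem1 \<nu> has_real_derivative (1 + x) powr (\<nu> - 2)) (at x)"
      unfolding taylor_rem1_def by simp
    then show "(taylor_rem1 \<nu> has_vector_derivative (1 + x) powr (\<nu> - 2)) (at x within {0..u})"
      by (simp add: has_real_derivative_iff_has_vector_derivative has_vector_derivative_at_within)
  qed
  then show ?thesis by (simp add: taylor_rem1_def)
qed

lemma taylor_rem2_has_integral:
  assumes \<nu>: "\<nu> \<noteq> 1" "\<nu> \<noteq> 0" and v: "v \<ge> 0"
  shows "(taylor_rem1 \<nu> has_integral taylor_rem2 \<nu> v) {0..v}"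
proof -
  have "(taylor_rem1 \<nu> has_integral (taylor_rem2 \<nu> v - taylor_rem2 \<nu> 0)) {0..v}"
  proof (rule fundamental_theorem_of_calculus[OF v])
    fix x assume x: "x \<in> {0..v}"
    have "((\<lambda>v. ((1 + v) powr \<nu> - 1 - \<nu> * v) / (\<nu> * (\<nu> - 1))) has_real_derivative
           ((\<nu> * (1 + x) powr (\<nu> - 1) * 1 - 0 - \<nu> * 1) / (\<nu> * (\<nu> - 1)))) (at x)"
      using x \<nu> by (intro derivative_eq_intros) auto
    moreover have "((\<nu> * (1 + x) powr (\<nu> - 1) * 1 - 0 - \<nu> * 1) / (\<nu> * (\<nu> - 1))) = taylor_rem1 \<nu> x"
      using \<nu> unfolding taylor_rem1_def by (simp add: field_simps)
    ultimately have "(taylor_rem2 \<nu> has_real_derivative taylor_rem1 \<nu> x) (at x)"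
      unfolding taylor_rem2_def by simp
    then show "(taylor_rem2 \<nu> has_vector_derivative taylor_rem1 \<nu> x) (at x within {0..v})"
      by (simp add: has_real_derivative_iff_has_vector_derivative has_vector_derivative_at_within)
  qed
  then show ?thesis by (simp add: taylor_rem2_def)
qed

lemma taylor_rem1_nonneg:
  assumes "u \<ge> 0" shows "taylor_rem1 \<nu> u \<ge> 0"
proof (cases "\<nu> > 1")
  case True
  have "(1 + u) powr (\<nu> - 1) \<ge> 1" using assms True by (simp add: ge_one_powr_ge_zero)
  then show ?thesis using True by (simp add: taylor_rem1_def)
next
  case False
  have "(1 + u) powr (\<nu> - 1) \<le> 1 powr (\<nu> - 1)"
    using assms False by (intro powr_mono2') auto
  then show ?thesis using False by (cases "\<nu> = 1") (auto simp: taylor_rem1_def divide_nonpos_neg)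
qed

lemma taylor_rem1_le:
  assumes \<nu>: "\<nu> \<noteq> 1" "\<nu> < 2" and u: "u \<ge> 0" shows "taylor_rem1 \<nu> u \<le> u"
proof -
  have "((\<lambda>w. 1::real) has_integral u) {0..u}"
    using has_integral_const_real[of "1::real" 0 u] u by simp
  then show ?thesis
  proof (rule has_integral_le[OF taylor_rem1_has_integral[OF \<nu>(1) u]])
    fix x assume "x \<in> {0..u}"
    then have "(1 + x) powr (\<nu> - 2) \<le> (1 + x) powr 0" using \<nu> by (intro powr_mono) auto
    then show "(1 + x) powr (\<nu> - 2) \<le> 1" using \<open>x \<in> {0..u}\<close> by simp
  qed
qed

lemma nn_integral_taylor_rem1:
  assumes \<nu>: "\<nu> \<noteq> 1" and u: "u \<ge> 0"
  shows "(\<integral>\<^sup>+w. ennreal (indicator {0..u} w * (1 + w) powr (\<nu> - 2)) \<partial>lborel) = ennreal (taylor_rem1 \<nu> u)"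
  using nn_integral_has_integral_lebesgue[OF _ taylor_rem1_has_integral[OF \<nu> u]] by simp

lemma nn_integral_taylor_rem2:
  assumes \<nu>: "\<nu> \<noteq> 1" "\<nu> \<noteq> 0" and v: "v \<ge> 0"
  shows "(\<integral>\<^sup>+u. ennreal (indicator {0..v} u * taylor_rem1 \<nu> u) \<partial>lborel) = ennreal (taylor_rem2 \<nu> v)"
  using nn_integral_has_integral_lebesgue[OF _ taylor_rem2_has_integral[OF \<nu> v]] taylor_rem1_nonneg by simp

lemma taylor_rem2_nonneg:
  assumes \<nu>: "\<nu> \<noteq> 1" "\<nu> \<noteq> 0" and v: "v \<ge> 0" shows "taylor_rem2 \<nu> v \<ge> 0"
  using has_integral_nonneg[OF taylor_rem2_has_integral[OF \<nu> v]] taylor_rem1_nonneg by auto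

definition tail_constant :: "real \<Rightarrow> real \<Rightarrow> real" where
  "tail_constant \<alpha> \<nu> = Gamma (2 - \<alpha>) * Gamma (\<alpha> - \<nu>) / Gamma (2 - \<nu>) / (\<alpha> - 1)"

lemma tail_constant_nonneg:
  assumes "1 < \<alpha>" "\<alpha> < 2" "\<nu> < \<alpha>" shows "tail_constant \<alpha> \<nu> \<ge> 0"
  using assms by (auto simp: tail_constant_def Gamma_real_pos intro!: divide_nonneg_pos mult_nonneg_nonneg less_imp_le)

lemma kappa0_eq_tail_constant:
  assumes \<alpha>: "1 < \<alpha>" "\<alpha> < 2" and \<nu>: "\<nu> < \<alpha>"
  shows "kappa0 \<alpha> \<nu> = (\<nu> - 1) * tail_constant \<alpha> \<nu>"
proof -
  have ni: "1 - \<alpha> \<notin> \<int>\<^sub>\<le>\<^sub>0"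
  proof
    assume "1 - \<alpha> \<in> \<int>\<^sub>\<le>\<^sub>0"
    then obtain n :: int where n: "1 - \<alpha> = of_int n" by (auto elim: nonpos_Ints_cases)
    then have "-1 < n" "n < 0" using \<alpha> by linarith+
    then show False by simp
  qed
  have g2: "Gamma (2 - \<alpha>) = (1 - \<alpha>) * Gamma (1 - \<alpha>)"
    using Gamma_plus1[OF ni] by (simp add: algebra_simps)
  have gp: "Gamma (2 - \<nu>) > 0" using \<alpha> \<nu> by (intro Gamma_real_pos) auto
  have a1: "\<alpha> - 1 \<noteq> 0" using \<alpha> by simp
  have g0: "Gamma (2 - \<nu>) \<noteq> 0" using gp by simp
  show ?thesis using a1 g0 unfolding kappa0_def tail_constant_def g2 by (simp add: field_simps)
qed

lemma nn_integral_taylor_rem1_powr: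
  fixes \<alpha> \<nu> :: real
  assumes \<alpha>: "1 < \<alpha>" "\<alpha> < 2" and \<nu>: "\<nu> < \<alpha>" "\<nu> \<noteq> 1"
  shows "(\<integral>\<^sup>+u. ennreal (indicator {0<..} u * taylor_rem1 \<nu> u * u powr (-\<alpha>)) \<partial>lborel)
       = ennreal (tail_constant \<alpha> \<nu>)"
proof -
  have "(\<integral>\<^sup>+u. ennreal (indicator {0<..} u * taylor_rem1 \<nu> u * u powr (-\<alpha>)) \<partial>lborel)
      = (\<integral>\<^sup>+u. \<integral>\<^sup>+w. ennreal (if 0 < u \<and> 0 \<le> w \<and> w \<le> u then u powr (-\<alpha>) * (1 + w) powr (\<nu> - 2) else 0) \<partial>lborel \<partial>lborel)"
  proof (intro nn_integral_cong)
    fix u :: real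
    show "ennreal (indicator {0<..} u * taylor_rem1 \<nu> u * u powr (-\<alpha>)) =
      (\<integral>\<^sup>+w. ennreal (if 0 < u \<and> 0 \<le> w \<and> w \<le> u then u powr (-\<alpha>) * (1 + w) powr (\<nu> - 2) else 0) \<partial>lborel)"
    proof (cases "u > 0")
      case True
      have "(\<integral>\<^sup>+w. ennreal (if 0 < u \<and> 0 \<le> w \<and> w \<le> u then u powr (-\<alpha>) * (1 + w) powr (\<nu> - 2) else 0) \<partial>lborel)
          = (\<integral>\<^sup>+w. ennreal (u powr (-\<alpha>)) * ennreal (indicator {0..u} w * (1 + w) powr (\<nu> - 2)) \<partial>lborel)"
        using True by (intro nn_integral_cong) (auto simp: indicator_def ennreal_mult)
      also have "\<dots> = ennreal (u powr (-\<alpha>)) * ennreal (taylor_rem1 \<nu> u)"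
        using True \<nu> by (subst nn_integral_cmult) (auto simp: nn_integral_taylor_rem1)
      also have "\<dots> = ennreal (indicator {0<..} u * taylor_rem1 \<nu> u * u powr (-\<alpha>))"
        using True taylor_rem1_nonneg[of u \<nu>] by (simp add: ennreal_mult[symmetric] mult_ac)
      finally show ?thesis by simp
    qed (simp add: indicator_def)
  qed
  also have "\<dots> = (\<integral>\<^sup>+w. \<integral>\<^sup>+u. ennreal (if 0 < u \<and> 0 \<le> w \<and> w \<le> u then u powr (-\<alpha>) * (1 + w) powr (\<nu> - 2) else 0) \<partial>lborel \<partial>lborel)"
    by (subst lborel_pair.Fubini') (auto simp: case_prod_unfold)
  also have "\<dots> = (\<integral>\<^sup>+w. ennreal (1 / (\<alpha> - 1)) * ennreal (indicator {0..} w * w powr ((2 - \<alpha>) - 1) * (1 + w) powr (-((2 - \<alpha>) + (\<alpha> - \<nu>)))) \<partial>lborel)"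
  proof (intro nn_integral_cong_AE eventually_mono[OF AE_lborel_singleton[of 0]])
    fix w :: real assume w0: "w \<noteq> 0"
    show "(\<integral>\<^sup>+u. ennreal (if 0 < u \<and> 0 \<le> w \<and> w \<le> u then u powr (-\<alpha>) * (1 + w) powr (\<nu> - 2) else 0) \<partial>lborel)
        = ennreal (1 / (\<alpha> - 1)) * ennreal (indicator {0..} w * w powr ((2 - \<alpha>) - 1) * (1 + w) powr (-((2 - \<alpha>) + (\<alpha> - \<nu>))))"
    proof (cases "w > 0")
      case True
      have "(\<integral>\<^sup>+u. ennreal (if 0 < u \<and> 0 \<le> w \<and> w \<le> u then u powr (-\<alpha>) * (1 + w) powr (\<nu> - 2) else 0) \<partial>lborel)
          = (\<integral>\<^sup>+u. ennreal ((1 + w) powr (\<nu> - 2)) * ennreal (indicator {w..} u * u powr (-\<alpha>)) \<partial>lborel)"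
        using True by (intro nn_integral_cong) (auto simp: indicator_def ennreal_mult[symmetric] mult_ac)
      also have "\<dots> = ennreal ((1 + w) powr (\<nu> - 2)) * ennreal (w powr (1 - \<alpha>) / (\<alpha> - 1))"
        using True \<alpha> by (subst nn_integral_cmult) (auto simp: nn_integral_powr_tail)
      also have "\<dots> = ennreal (1 / (\<alpha> - 1)) * ennreal (indicator {0..} w * w powr ((2 - \<alpha>) - 1) * (1 + w) powr (-((2 - \<alpha>) + (\<alpha> - \<nu>))))"
        using True \<alpha> by (simp add: ennreal_mult[symmetric] field_simps)
      finally show ?thesis .
    qed (use w0 in \<open>auto simp: indicator_def\<close>)
  qed
  also have "\<dots> = ennreal (1 / (\<alpha> - 1)) * ennreal (Gamma (2 - \<alpha>) * Gamma (\<alpha> - \<nu>) / Gamma (2 - \<alpha> + (\<alpha> - \<nu>)))"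
    using \<alpha> \<nu> nn_integral_Beta_second_kind[of "2 - \<alpha>" "\<alpha> - \<nu>"] by (subst nn_integral_cmult) auto
  also have "\<dots> = ennreal (tail_constant \<alpha> \<nu>)"
    using \<alpha> \<nu> by (subst ennreal_mult[symmetric]) (auto simp: Gamma_real_pos tail_constant_def)
  finally show ?thesis .
qed

section \<open>The heavy right tail\<close>

lemma nn_integral_layer_cake:
  fixes M :: "real measure" and T w :: "real \<Rightarrow> real"
  assumes M: "sigma_finite_measure M" and sM: "sets M = sets borel"
    and T[measurable]: "T \<in> borel_measurable borel" and w[measurable]: "w \<in> borel_measurable borel"
  shows "(\<integral>\<^sup>+z. (\<integral>\<^sup>+u. ennreal (if 0 < u \<and> u < T z then w u else 0) \<partial>lborel) \<partial>M)
       = (\<integral>\<^sup>+u. ennreal (indicator {0<..} u * w u) * emeasure M {z. u < T z} \<partial>lborel)"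
proof -
  have PS: "pair_sigma_finite M lborel"
    unfolding pair_sigma_finite_def using M sigma_finite_lborel by auto
  have meas: "(\<lambda>(z, u). ennreal (if 0 < u \<and> u < T z then w u else 0)) \<in> borel_measurable (M \<Otimes>\<^sub>M lborel)"
  proof -
    have m: "(\<lambda>(z, u). ennreal (if 0 < u \<and> u < T z then w u else 0)) \<in> borel_measurable (borel \<Otimes>\<^sub>M lborel)"
      by measurable
    have eqs: "sets (M \<Otimes>\<^sub>M lborel) = sets (borel \<Otimes>\<^sub>M lborel)"
      by (rule sets_pair_measure_cong[OF sM refl])
    show ?thesis using m by (subst measurable_cong_sets[OF eqs refl])
  qed
  have "(\<integral>\<^sup>+z. (\<integral>\<^sup>+u. ennreal (if 0 < u \<and> u < T z then w u else 0) \<partial>lborel) \<partial>M)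
      = (\<integral>\<^sup>+u. (\<integral>\<^sup>+z. ennreal (if 0 < u \<and> u < T z then w u else 0) \<partial>M) \<partial>lborel)"
    using pair_sigma_finite.Fubini'[OF PS meas] by simp
  also have "\<dots> = (\<integral>\<^sup>+u. ennreal (indicator {0<..} u * w u) * emeasure M {z. u < T z} \<partial>lborel)"
  proof (intro nn_integral_cong)
    fix u :: real
    have "(\<integral>\<^sup>+z. ennreal (if 0 < u \<and> u < T z then w u else 0) \<partial>M)
        = (\<integral>\<^sup>+z. ennreal (indicator {0<..} u * w u) * indicator {z. u < T z} z \<partial>M)"
      by (intro nn_integral_cong) (auto simp: indicator_def)
    also have "\<dots> = ennreal (indicator {0<..} u * w u) * emeasure M {z. u < T z}"
      using sM by (simp add: nn_integral_cmult_indicator)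
    finally show "(\<integral>\<^sup>+z. ennreal (if 0 < u \<and> u < T z then w u else 0) \<partial>M) = ennreal (indicator {0<..} u * w u) * emeasure M {z. u < T z}" .
  qed
  finally show ?thesis .
qed
lemma pospart_max: "pospart y = max y 0"
  by (simp add: pospart_def max_def)

lemma negpart_max: "negpart y = max (- y) 0"
  by (simp add: negpart_def max_def)

lemma pospart_measurable[measurable]: "pospart \<in> borel_measurable borel"
  unfolding pospart_max[abs_def] by measurable

lemma negpart_measurable[measurable]: "negpart \<in> borel_measurable borel"
  unfolding negpart_max[abs_def] by measurable

lemma nn_integral_taylor_rem2_pospart:
  fixes M :: "real measure" and T :: "real \<Rightarrow> real"
  assumes \<nu>: "\<nu> \<noteq> 0" "\<nu> \<noteq> 1" and M: "sigma_finite_measure M" and sM: "sets M = sets borel"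
    and T[measurable]: "T \<in> borel_measurable borel" and s: "s > 0"
  shows "(\<integral>\<^sup>+z. ennreal (taylor_rem2 \<nu> (pospart (T z) / s)) \<partial>M)
       = (\<integral>\<^sup>+u. ennreal (indicator {0<..} u * taylor_rem1 \<nu> u) * emeasure M {z. s * u < T z} \<partial>lborel)"
proof -
  have "ennreal (taylor_rem2 \<nu> (pospart (T z) / s))
      = (\<integral>\<^sup>+u. ennreal (if 0 < u \<and> u < T z / s then taylor_rem1 \<nu> u else 0) \<partial>lborel)" for z
  proof -
    define v where "v = pospart (T z) / s"
    have "v \<ge> 0" using s by (simp add: v_def pospart_def)
    have "AE u in lborel. u \<noteq> 0 \<and> u \<noteq> v"
      using AE_lborel_singleton[of 0] AE_lborel_singleton[of v] by eventually_elim auto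
    then have "AE u in lborel. ennreal (indicator {0..v} u * taylor_rem1 \<nu> u)
                = ennreal (if 0 < u \<and> u < T z / s then taylor_rem1 \<nu> u else 0)"
      by eventually_elim
        (use s divide_neg_pos[of "T z" s] in \<open>auto simp: v_def pospart_def indicator_def\<close>)
    then show ?thesis
      using nn_integral_taylor_rem2[OF \<nu>(2,1) \<open>v \<ge> 0\<close>] by (simp add: v_def nn_integral_cong_AE)
  qed
  then have "(\<integral>\<^sup>+z. ennreal (taylor_rem2 \<nu> (pospart (T z) / s)) \<partial>M)
      = (\<integral>\<^sup>+u. ennreal (indicator {0<..} u * taylor_rem1 \<nu> u) * emeasure M {z. u < T z / s} \<partial>lborel)"
    using nn_integral_layer_cake[OF M sM _ taylor_rem1_measurable, of "\<lambda>z. T z / s"] by simp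
  moreover have "{z. u < T z / s} = {z. s * u < T z}" for u
    using s by (auto simp: field_simps)
  ultimately show ?thesis by simp
qed

definition tail_weight :: "real \<Rightarrow> real \<Rightarrow> real \<Rightarrow> real" where
  "tail_weight \<alpha> \<nu> u = indicator {0<..} u * taylor_rem1 \<nu> u * u powr (- \<alpha>)"

lemma tail_weight_measurable[measurable]: "tail_weight \<alpha> \<nu> \<in> borel_measurable borel"
  unfolding tail_weight_def by measurable

lemma tail_weight_nonneg: "tail_weight \<alpha> \<nu> u \<ge> 0"
  using taylor_rem1_nonneg[of u \<nu>] by (auto simp: tail_weight_def indicator_def)

lemma tail_weight_nonpos_eq_0: "u \<le> 0 \<Longrightarrow> tail_weight \<alpha> \<nu> u = 0"
  by (simp add: tail_weight_def)

lemma tail_weight_le: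
  assumes "\<nu> \<noteq> 1" "\<nu> < 2" "u > 0"
  shows "tail_weight \<alpha> \<nu> u \<le> u powr (1 - \<alpha>)"
proof -
  have "tail_weight \<alpha> \<nu> u = taylor_rem1 \<nu> u * u powr (- \<alpha>)"
    using assms by (simp add: tail_weight_def)
  also have "\<dots> \<le> u * u powr (- \<alpha>)"
    using taylor_rem1_le[of \<nu> u] assms by (intro mult_right_mono) auto
  also have "\<dots> = u powr (1 - \<alpha>)"
    using assms by (simp add: powr_diff powr_minus field_simps)
  finally show ?thesis .
qed

lemma has_bochner_integral_tail_weight:
  assumes "1 < \<alpha>" "\<alpha> < 2" "\<nu> < \<alpha>" "\<nu> \<noteq> 1"
  shows "has_bochner_integral lborel (tail_weight \<alpha> \<nu>) (tail_constant \<alpha> \<nu>)"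
  using assms nn_integral_taylor_rem1_powr[of \<alpha> \<nu>] tail_constant_nonneg[of \<alpha> \<nu>] tail_weight_nonneg
  by (intro has_bochner_integral_nn_integral) (auto simp: tail_weight_def)

lemma has_bochner_integral_powr_head:
  fixes \<delta> \<alpha> :: real
  assumes "\<delta> \<ge> 0" "\<alpha> < 2"
  shows "has_bochner_integral lborel (\<lambda>u. indicator {0..\<delta>} u * u powr (1 - \<alpha>)) (\<delta> powr (2 - \<alpha>) / (2 - \<alpha>))"
  using assms nn_integral_powr_head[of \<delta> "1 - \<alpha>"] by (intro has_bochner_integral_nn_integral) auto

lemma weighted_tail_pointwise_bound:
  fixes k \<phi> :: "real \<Rightarrow> real"
  assumes k: "\<And>u. k u \<ge> 0" "\<And>u. u \<le> 0 \<Longrightarrow> k u = 0" "\<And>u. u > 0 \<Longrightarrow> k u \<le> u powr (1 - \<alpha>)"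
    and \<phi>_bounded: "\<And>y. y > 0 \<Longrightarrow> 0 \<le> \<phi> y \<and> \<phi> y \<le> Mb"
    and \<phi>_close: "\<And>y. y \<ge> Y \<Longrightarrow> \<bar>\<phi> y - c\<bar> \<le> \<epsilon>"
    and c: "c \<ge> 0" and s: "s > 0" and \<delta>: "\<delta> > 0" "s * \<delta> \<ge> Y"
  shows "\<bar>k u * \<phi> (s * u) - c * k u\<bar> \<le> \<epsilon> * k u + (Mb + c) * (indicator {0..\<delta>} u * u powr (1 - \<alpha>))"
proof -
  have \<epsilon>: "\<epsilon> \<ge> 0" using \<phi>_close[of "max Y 1"] by linarith
  have Mb: "Mb \<ge> 0" using \<phi>_bounded[of 1] by linarith
  define h where "h u = indicator {0..\<delta>} u * u powr (1 - \<alpha>)" for u :: real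
  have "\<bar>k u * \<phi> (s * u) - c * k u\<bar> \<le> \<epsilon> * k u + (Mb + c) * h u"
  proof (cases "u > 0")
    case u: True
    have "k u * \<phi> (s * u) - c * k u = k u * (\<phi> (s * u) - c)"
      by (simp add: algebra_simps)
    then have "\<bar>k u * \<phi> (s * u) - c * k u\<bar> = k u * \<bar>\<phi> (s * u) - c\<bar>"
      using k(1)[of u] by (simp add: abs_mult)
    also have "\<dots> \<le> \<epsilon> * k u + (Mb + c) * h u"
    proof (cases "s * u \<ge> Y")
      case True
      have "k u * \<bar>\<phi> (s * u) - c\<bar> \<le> \<epsilon> * k u"
        using mult_left_mono[OF \<phi>_close[OF True] k(1)[of u]] by (simp add: mult.commute)
      moreover have "0 \<le> (Mb + c) * h u" using Mb c by (simp add: h_def)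
      ultimately show ?thesis by linarith
    next
      case False
      then have "u \<le> \<delta>" using \<delta> s by (meson mult_le_cancel_left_pos order.trans nle_le)
      then have "h u = u powr (1 - \<alpha>)" using u by (simp add: h_def)
      moreover have "\<bar>\<phi> (s * u) - c\<bar> \<le> Mb + c" using \<phi>_bounded[of "s * u"] s u c by auto
      ultimately have "k u * \<bar>\<phi> (s * u) - c\<bar> \<le> (Mb + c) * h u"
        using k(1,3)[of u] u Mb c by (metis abs_ge_zero mult.commute mult_mono powr_ge_zero)
      then show ?thesis using k(1)[of u] \<epsilon> by (meson add_increasing mult_nonneg_nonneg)
    qed
    finally show ?thesis .
  qed (use Mb c in \<open>simp add: k(2) h_def\<close>)
  then show ?thesis by (simp add: h_def)
qed

text \<open>Only the part of the weight on \<open>(0, \<delta>]\<close> escapes the \<open>\<epsilon>\<close>-approximation of \<open>\<phi>\<close> by \<open>c\<close>, and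
  there it is dominated by \<open>u\<^sup>1\<^sup>-\<^sup>\<alpha>\<close>.\<close>

lemma weighted_tail_integral_bound:
  fixes k \<phi> :: "real \<Rightarrow> real"
  assumes k: "has_bochner_integral lborel k L" "\<And>u. k u \<ge> 0" "\<And>u. u \<le> 0 \<Longrightarrow> k u = 0"
      "\<And>u. u > 0 \<Longrightarrow> k u \<le> u powr (1 - \<alpha>)" and \<alpha>: "\<alpha> < 2"
    and \<phi>[measurable]: "\<phi> \<in> borel_measurable borel"
    and \<phi>_bounded: "\<And>y. y > 0 \<Longrightarrow> 0 \<le> \<phi> y \<and> \<phi> y \<le> Mb"
    and \<phi>_close: "\<And>y. y \<ge> Y \<Longrightarrow> \<bar>\<phi> y - c\<bar> \<le> \<epsilon>"
    and c: "c \<ge> 0" and s: "s > 0" and \<delta>: "\<delta> > 0" "s * \<delta> \<ge> Y"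
  shows "integrable lborel (\<lambda>u. k u * \<phi> (s * u))"
    and "\<bar>(\<integral>u. k u * \<phi> (s * u) \<partial>lborel) - c * L\<bar> \<le> \<epsilon> * L + (Mb + c) * (\<delta> powr (2 - \<alpha>) / (2 - \<alpha>))"
proof -
  have Mb: "Mb \<ge> 0" using \<phi>_bounded[of 1] by linarith
  have k_int: "integrable lborel k" using k(1) by (rule integrable.intros)
  define h where "h u = indicator {0..\<delta>} u * u powr (1 - \<alpha>)" for u :: real
  have h: "has_bochner_integral lborel h (\<delta> powr (2 - \<alpha>) / (2 - \<alpha>))"
    unfolding h_def using has_bochner_integral_powr_head[of \<delta> \<alpha>] \<delta> \<alpha> by simp
  have bound: "\<bar>k u * \<phi> (s * u) - c * k u\<bar> \<le> \<epsilon> * k u + (Mb + c) * h u" for u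
    unfolding h_def by (rule weighted_tail_pointwise_bound[OF k(2-4) \<phi>_bounded \<phi>_close c s \<delta>])
  have majorant: "has_bochner_integral lborel (\<lambda>u. \<epsilon> * k u + (Mb + c) * h u)
      (\<epsilon> * L + (Mb + c) * (\<delta> powr (2 - \<alpha>) / (2 - \<alpha>)))"
    using k(1) h by (intro has_bochner_integral_add has_bochner_integral_mult_right)
  have integrand_bound: "norm (k u * \<phi> (s * u)) \<le> norm (Mb * k u)" for u
  proof (cases "u > 0")
    case True
    then have "0 \<le> \<phi> (s * u)" "\<phi> (s * u) \<le> Mb" using \<phi>_bounded[of "s * u"] s by auto
    then show ?thesis
      using mult_left_mono[of "\<phi> (s * u)" Mb "k u"] k(2)[of u] Mb by (simp add: abs_mult mult.commute)
  qed (simp add: k(3))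
  have km[measurable]: "k \<in> borel_measurable lborel" using k_int by (rule borel_measurable_integrable)
  show int: "integrable lborel (\<lambda>u. k u * \<phi> (s * u))"
    using integrable_mult_right[OF k_int, of Mb] by (rule Bochner_Integration.integrable_bound)
      (use integrand_bound in auto)
  have "\<bar>(\<integral>u. k u * \<phi> (s * u) \<partial>lborel) - c * L\<bar> = \<bar>\<integral>u. k u * \<phi> (s * u) - c * k u \<partial>lborel\<bar>"
    using int k_int has_bochner_integral_integral_eq[OF k(1)] by simp
  also have "\<dots> \<le> (\<integral>u. \<epsilon> * k u + (Mb + c) * h u \<partial>lborel)"
    using int k_int bound integrable.intros[OF majorant] by (intro integral_abs_bound_integral) auto
  also have "\<dots> = \<epsilon> * L + (Mb + c) * (\<delta> powr (2 - \<alpha>) / (2 - \<alpha>))"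
    using majorant by (rule has_bochner_integral_integral_eq)
  finally show "\<bar>(\<integral>u. k u * \<phi> (s * u) \<partial>lborel) - c * L\<bar> \<le> \<epsilon> * L + (Mb + c) * (\<delta> powr (2 - \<alpha>) / (2 - \<alpha>))" .
qed

lemma borel_measurable_tail_probability:
  fixes M :: "real measure" and T :: "real \<Rightarrow> real"
  assumes "prob_space M" "sets M = sets borel" "T \<in> borel_measurable borel"
  shows "(\<lambda>y. measure M {z. y < T z}) \<in> borel_measurable borel"
proof -
  interpret prob_space M by fact
  have "mono (\<lambda>y. - measure M {z. y < T z})"
  proof (rule monoI)
    fix y1 y2 :: real assume "y1 \<le> y2"
    then have "{z. y2 < T z} \<subseteq> {z. y1 < T z}" by auto
    then show "- measure M {z. y1 < T z} \<le> - measure M {z. y2 < T z}"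
      using assms(2,3) by (simp add: finite_measure_mono)
  qed
  from borel_measurable_uminus[OF borel_measurable_mono[OF this]] show ?thesis by simp
qed

lemma tail_expectation_bound:
  fixes M :: "real measure" and T :: "real \<Rightarrow> real"
  assumes \<nu>: "\<nu> \<noteq> 0" "\<nu> \<noteq> 1" "\<nu> < \<alpha>" and \<alpha>: "1 < \<alpha>" "\<alpha> < 2" and c: "c \<ge> 0"
    and M: "prob_space M" and sM: "sets M = sets borel" and T[measurable]: "T \<in> borel_measurable borel"
    and tail_bounded: "\<And>y. y > 0 \<Longrightarrow> y powr \<alpha> * measure M {z. y < T z} \<le> Mb"
    and tail_close: "\<And>y. y \<ge> Y \<Longrightarrow> \<bar>y powr \<alpha> * measure M {z. y < T z} - c\<bar> \<le> \<epsilon>"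
    and s: "s > 0" and \<delta>: "\<delta> > 0" "s * \<delta> \<ge> Y"
  shows "integrable M (\<lambda>z. taylor_rem2 \<nu> (pospart (T z) / s))"
    and "\<bar>s powr \<alpha> * (\<integral>z. taylor_rem2 \<nu> (pospart (T z) / s) \<partial>M) - c * tail_constant \<alpha> \<nu>\<bar>
           \<le> \<epsilon> * tail_constant \<alpha> \<nu> + (Mb + c) * (\<delta> powr (2 - \<alpha>) / (2 - \<alpha>))"
proof -
  interpret prob_space M by (rule M)
  define \<phi> where "\<phi> y = y powr \<alpha> * measure M {z. y < T z}" for y
  define I where "I = (\<integral>u. tail_weight \<alpha> \<nu> u * \<phi> (s * u) \<partial>lborel)"
  have [measurable]: "\<phi> \<in> borel_measurable borel"
    unfolding \<phi>_def using borel_measurable_tail_probability[OF M sM T] by measurable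
  note weight = has_bochner_integral_tail_weight[OF \<alpha> \<nu>(3,2)]
  have int: "integrable lborel (\<lambda>u. tail_weight \<alpha> \<nu> u * \<phi> (s * u))"
    and bound: "\<bar>I - c * tail_constant \<alpha> \<nu>\<bar>
                  \<le> \<epsilon> * tail_constant \<alpha> \<nu> + (Mb + c) * (\<delta> powr (2 - \<alpha>) / (2 - \<alpha>))"
    using weighted_tail_integral_bound[OF weight tail_weight_nonneg tail_weight_nonpos_eq_0
        tail_weight_le[OF \<nu>(2)] \<alpha>(2), of \<phi> Mb Y c \<epsilon> s \<delta>] tail_bounded tail_close \<nu> \<alpha> c s \<delta>
    by (auto simp: \<phi>_def I_def)
  have nonneg: "tail_weight \<alpha> \<nu> u * \<phi> (s * u) \<ge> 0" for u
    using tail_weight_nonneg[of \<alpha> \<nu> u] s by (cases "u > 0") (auto simp: \<phi>_def tail_weight_def)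
  have I_nonneg: "I \<ge> 0"
    unfolding I_def using nonneg by (simp add: Bochner_Integration.integral_nonneg)
  have "(\<integral>\<^sup>+z. ennreal (taylor_rem2 \<nu> (pospart (T z) / s)) \<partial>M)
      = (\<integral>\<^sup>+u. ennreal (s powr (- \<alpha>)) * ennreal (tail_weight \<alpha> \<nu> u * \<phi> (s * u)) \<partial>lborel)"
    unfolding nn_integral_taylor_rem2_pospart[OF \<nu>(1,2) prob_space_imp_sigma_finite[OF M] sM T s]
  proof (intro nn_integral_cong)
    fix u :: real
    have "u > 0 \<Longrightarrow> s powr (- \<alpha>) * (tail_weight \<alpha> \<nu> u * \<phi> (s * u))
                    = taylor_rem1 \<nu> u * measure M {z. s * u < T z}"
      using s by (simp add: tail_weight_def \<phi>_def powr_mult powr_minus field_simps)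
    then show "ennreal (indicator {0<..} u * taylor_rem1 \<nu> u) * emeasure M {z. s * u < T z}
             = ennreal (s powr (- \<alpha>)) * ennreal (tail_weight \<alpha> \<nu> u * \<phi> (s * u))"
      using taylor_rem1_nonneg[of u \<nu>] nonneg[of u] sM
      by (cases "u > 0") (auto simp: emeasure_eq_measure ennreal_mult[symmetric] tail_weight_def)
  qed
  also have "\<dots> = ennreal (s powr (- \<alpha>) * I)"
    using int nonneg I_nonneg by (subst nn_integral_cmult) (auto simp: I_def nn_integral_eq_integral ennreal_mult)
  finally have "has_bochner_integral M (\<lambda>z. taylor_rem2 \<nu> (pospart (T z) / s)) (s powr (- \<alpha>) * I)"
    using taylor_rem2_nonneg[OF \<nu>(2,1)] s I_nonneg sM
    by (intro has_bochner_integral_nn_integral)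
      (auto simp: I_def pospart_def measurable_cong_sets[OF sM refl])
  then show "integrable M (\<lambda>z. taylor_rem2 \<nu> (pospart (T z) / s))"
    and "\<bar>s powr \<alpha> * (\<integral>z. taylor_rem2 \<nu> (pospart (T z) / s) \<partial>M) - c * tail_constant \<alpha> \<nu>\<bar>
           \<le> \<epsilon> * tail_constant \<alpha> \<nu> + (Mb + c) * (\<delta> powr (2 - \<alpha>) / (2 - \<alpha>))"
    using bound s by (auto simp: has_bochner_integral_iff powr_minus mult.assoc[symmetric])
qed

section \<open>Downward jumps\<close>

definition power_profile :: "real \<Rightarrow> (real \<Rightarrow> real) \<Rightarrow> bool" where
  "power_profile \<nu> F \<longleftrightarrow> F \<in> borel_measurable borel \<and> (\<forall>y\<ge>1. F y = y powr \<nu>) \<and>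
     (\<forall>y. \<bar>F y\<bar> \<le> 1 + (if \<nu> \<ge> 0 then \<bar>y\<bar> powr \<nu> else 0))"

lemma power_profile_f1: "power_profile \<nu> (f1 \<nu>)"
proof -
  have "\<bar>f1 \<nu> y\<bar> \<le> 1 + (if \<nu> \<ge> 0 then \<bar>y\<bar> powr \<nu> else 0)" for y
    using powr_mono2'[of \<nu> 1 y] by (cases "y \<ge> 1") (auto simp: f1_def)
  moreover have "f1 \<nu> \<in> borel_measurable borel" unfolding f1_def by measurable
  ultimately show ?thesis by (auto simp: power_profile_def f1_def)
qed

lemma power_profile_f2: "power_profile \<nu> (f2 \<nu>)"
proof -
  have "\<bar>f2 \<nu> y\<bar> \<le> 1 + (if \<nu> \<ge> 0 then \<bar>y\<bar> powr \<nu> else 0)" for y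
    using powr_mono2'[of \<nu> 1 "\<bar>y\<bar>"] by (cases "\<bar>y\<bar> \<ge> 1") (auto simp: f2_def)
  moreover have "f2 \<nu> \<in> borel_measurable borel" unfolding f2_def by measurable
  ultimately show ?thesis by (auto simp: power_profile_def f2_def)
qed

lemma powr_second_order_remainder_bound:
  fixes \<nu> u :: real
  assumes \<nu>: "\<nu> < 2" and u: "-1/2 \<le> u" "u \<le> 0"
  shows "\<bar>(1 + u) powr \<nu> - 1 - \<nu> * u\<bar> \<le> \<bar>\<nu> * (\<nu> - 1)\<bar> * 2 powr (2 - \<nu>) * u^2"
proof (cases "u = 0")
  case True then show ?thesis by simp
next
  case False
  then have u0: "u < 0" using u by simp
  define g where "g v = (1 + v) powr \<nu> - 1 - \<nu> * v" for v :: real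
  define g' where "g' v = \<nu> * (1 + v) powr (\<nu> - 1) - \<nu>" for v :: real
  define g'' where "g'' v = \<nu> * ((\<nu> - 1) * (1 + v) powr (\<nu> - 2))" for v :: real
  have dg: "DERIV g x :> g' x" if "u \<le> x" "x \<le> 0" for x
  proof -
    have "DERIV g x :> (\<nu> * (1 + x) powr (\<nu> - 1) * (0 + 1) - 0 - \<nu> * 1)"
      unfolding g_def using that u by (intro derivative_eq_intros) auto
    then show ?thesis by (simp add: g'_def)
  qed
  obtain xi where xi: "u < xi" "xi < 0" "g 0 - g u = (0 - u) * g' xi"
    using MVT2[OF u0 dg] by blast
  have dg': "DERIV g' x :> g'' x" if "xi \<le> x" "x \<le> 0" for x
  proof -
    have "DERIV g' x :> (\<nu> * ((\<nu> - 1) * (1 + x) powr (\<nu> - 1 - 1) * (0 + 1)) - 0)"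
      unfolding g'_def using that xi u by (intro derivative_eq_intros) auto
    then show ?thesis by (simp add: g''_def)
  qed
  obtain eta where eta: "xi < eta" "eta < 0" "g' 0 - g' xi = (0 - xi) * g'' eta"
    using MVT2[OF xi(2) dg'] by blast
  have "1 + eta \<ge> 1/2" using eta xi u by simp
  then have pw: "(1 + eta) powr (\<nu> - 2) \<le> (1/2) powr (\<nu> - 2)"
    using \<nu> by (intro powr_mono2') auto
  have half: "(1/2::real) powr (\<nu> - 2) = 2 powr (2 - \<nu>)"
  proof -
    have "(1/2::real) powr (\<nu> - 2) = 1 / 2 powr (\<nu> - 2)" by (simp add: powr_divide)
    also have "\<dots> = 2 powr (- (\<nu> - 2))" by (simp only: powr_minus_divide)
    finally show ?thesis by simp
  qed
  have g'0: "g' 0 = 0" by (simp add: g'_def)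
  have g0: "g 0 = 0" by (simp add: g_def)
  have "\<bar>g'' eta\<bar> \<le> \<bar>\<nu> * (\<nu> - 1)\<bar> * 2 powr (2 - \<nu>)"
  proof -
    have "\<bar>\<nu> * (\<nu> - 1)\<bar> * (1 + eta) powr (\<nu> - 2) \<le> \<bar>\<nu> * (\<nu> - 1)\<bar> * 2 powr (2 - \<nu>)"
      using pw half by (intro mult_left_mono) auto
    then show ?thesis by (simp add: g''_def abs_mult mult_ac)
  qed
  moreover have "\<bar>g u\<bar> = \<bar>u\<bar> * \<bar>xi\<bar> * \<bar>g'' eta\<bar>"
    using xi(3) eta(3) g'0 g0 by (simp add: abs_mult)
  moreover have "\<bar>u\<bar> * \<bar>xi\<bar> \<le> u^2" using xi u0 by (simp add: power2_eq_square mult_left_mono)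
  ultimately have "\<bar>g u\<bar> \<le> u^2 * (\<bar>\<nu> * (\<nu> - 1)\<bar> * 2 powr (2 - \<nu>))"
    by (metis abs_ge_zero mult_mono zero_le_power2)
  then show ?thesis by (simp add: g_def mult_ac)
qed

lemma small_negative_jump_remainder_bound:
  assumes F: "power_profile \<nu> F" and s: "s \<ge> 2" and t: "- s / 2 \<le> t" "t < 0"
    and \<nu>: "\<nu> < 2" and \<gamma>: "\<gamma> \<le> 2"
  shows "\<bar>F (s + t) - s powr \<nu> - \<nu> * s powr (\<nu> - 1) * t\<bar>
           \<le> \<bar>\<nu> * (\<nu> - 1)\<bar> * 2 powr (2 - \<nu>) * s powr (\<nu> - \<gamma>) * \<bar>t\<bar> powr \<gamma>"
proof -
  define C where "C = \<bar>\<nu> * (\<nu> - 1)\<bar> * 2 powr (2 - \<nu>)"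
  define u where "u = t / s"
  have u: "-1/2 \<le> u" "u < 0" using t s by (auto simp: u_def field_simps)
  have "s + t \<ge> 1" "s + t = s * (1 + u)" using t s by (auto simp: u_def field_simps)
  then have F_eq: "F (s + t) = s powr \<nu> * (1 + u) powr \<nu>"
    using F u s by (simp add: power_profile_def powr_mult)
  have lin: "\<nu> * s powr (\<nu> - 1) * t = s powr \<nu> * (\<nu> * u)"
    using s by (simp add: u_def powr_diff field_simps)
  have "F (s + t) - s powr \<nu> - \<nu> * s powr (\<nu> - 1) * t
      = s powr \<nu> * ((1 + u) powr \<nu> - 1 - \<nu> * u)"
    unfolding F_eq lin by (simp add: algebra_simps)
  then have "\<bar>F (s + t) - s powr \<nu> - \<nu> * s powr (\<nu> - 1) * t\<bar>
      = s powr \<nu> * \<bar>(1 + u) powr \<nu> - 1 - \<nu> * u\<bar>"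
    by (simp add: abs_mult)
  also have "\<dots> \<le> s powr \<nu> * (C * \<bar>u\<bar> powr 2)"
    using powr_second_order_remainder_bound[OF \<nu> u(1)] u
    by (intro mult_left_mono) (auto simp: C_def powr_numeral[symmetric])
  also have "\<dots> \<le> s powr \<nu> * (C * \<bar>u\<bar> powr \<gamma>)"
    using u \<gamma> by (intro mult_left_mono powr_mono') (auto simp: C_def)
  also have "\<dots> = C * s powr (\<nu> - \<gamma>) * \<bar>t\<bar> powr \<gamma>"
    using s by (simp add: u_def abs_divide powr_divide powr_diff)
  finally show ?thesis by (simp add: C_def)
qed

lemma large_negative_jump_remainder_bound:
  assumes F: "power_profile \<nu> F" and s: "s > 0" and t: "t < - s / 2"
    and \<gamma>: "\<nu> \<le> \<gamma>" "1 \<le> \<gamma>" and \<beta>: "\<beta> \<ge> 0"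
  shows "\<bar>F (s + t) - s powr \<nu> - \<nu> * s powr (\<nu> - 1) * t\<bar>
           \<le> (2 + \<bar>\<nu>\<bar>) * 2 powr \<gamma> * s powr (\<nu> - \<gamma>) * \<bar>t\<bar> powr \<gamma> + 2 powr \<beta> * s powr (- \<beta>) * \<bar>t\<bar> powr \<beta>"
proof -
  define r where "r = 2 * \<bar>t\<bar> / s"
  have r: "r \<ge> 1" using t s by (auto simp: r_def field_simps)
  have r_powr: "r powr p = 2 powr p * s powr (- p) * \<bar>t\<bar> powr p" for p
    using s by (simp add: r_def powr_divide powr_mult powr_minus_divide)
  have r_\<gamma>: "r powr \<nu> \<le> r powr \<gamma>" "r \<le> r powr \<gamma>" "1 \<le> r powr \<gamma>" "1 \<le> r powr \<beta>"
    using r \<gamma> \<beta> powr_mono[of 1 \<gamma> r] powr_mono[of 0 \<gamma> r] ge_one_powr_ge_zero[of r \<beta>]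
    by (auto intro: powr_mono)
  have F_bound: "\<bar>F (s + t)\<bar> \<le> r powr \<beta> + s powr \<nu> * r powr \<gamma>"
  proof (cases "\<nu> \<ge> 0")
    case True
    have "\<bar>s + t\<bar> powr \<nu> \<le> \<bar>t\<bar> powr \<nu>" using True t s by (intro powr_mono2) auto
    also have "\<dots> = (s / 2) powr \<nu> * r powr \<nu>"
      using s r by (simp add: r_def powr_mult[symmetric])
    also have "\<dots> \<le> s powr \<nu> * r powr \<gamma>"
      using True s r_\<gamma>(1) by (intro mult_mono powr_mono2) auto
    finally show ?thesis using F r_\<gamma>(4) True by (auto simp: power_profile_def dest: spec[of _ "s + t"])
  next
    case False
    then have "\<bar>F (s + t)\<bar> \<le> 1" using F by (auto simp: power_profile_def)
    moreover have "0 \<le> s powr \<nu> * r powr \<gamma>" by simp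
    ultimately show ?thesis using r_\<gamma>(4) by linarith
  qed
  have "\<bar>\<nu> * s powr (\<nu> - 1) * t\<bar> = \<bar>\<nu>\<bar> * s powr \<nu> * (r / 2)"
    using s by (simp add: r_def powr_diff abs_mult field_simps)
  also have "\<dots> \<le> \<bar>\<nu>\<bar> * s powr \<nu> * r powr \<gamma>"
    using r_\<gamma>(2) r by (intro mult_left_mono) auto
  finally have lin_bound: "\<bar>\<nu> * s powr (\<nu> - 1) * t\<bar> \<le> \<bar>\<nu>\<bar> * (s powr \<nu> * r powr \<gamma>)"
    by (simp add: mult.assoc)
  have "s powr \<nu> \<le> s powr \<nu> * r powr \<gamma>"
    using mult_left_mono[OF r_\<gamma>(3), of "s powr \<nu>"] by simp
  then have "\<bar>F (s + t) - s powr \<nu> - \<nu> * s powr (\<nu> - 1) * t\<bar>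
      \<le> r powr \<beta> + (2 + \<bar>\<nu>\<bar>) * (s powr \<nu> * r powr \<gamma>)"
    using F_bound lin_bound powr_ge_zero[of s \<nu>] unfolding distrib_right by arith
  also have "s powr \<nu> * r powr \<gamma> = 2 powr \<gamma> * s powr (\<nu> - \<gamma>) * \<bar>t\<bar> powr \<gamma>"
    unfolding r_powr by (simp add: powr_diff powr_minus field_simps)
  finally show ?thesis unfolding r_powr by (simp add: mult_ac)
qed

lemma negative_jump_remainder_bound:
  assumes F: "power_profile \<nu> F" and s: "s \<ge> 2" and t: "t < 0"
    and \<nu>: "\<nu> < 2" and \<gamma>: "\<nu> \<le> \<gamma>" "1 \<le> \<gamma>" "\<gamma> \<le> 2" and \<beta>: "\<beta> \<ge> 0"
  shows "\<bar>F (s + t) - s powr \<nu> - \<nu> * s powr (\<nu> - 1) * t\<bar>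
     \<le> (\<bar>\<nu> * (\<nu> - 1)\<bar> * 2 powr (2 - \<nu>) + (2 + \<bar>\<nu>\<bar>) * 2 powr \<gamma>) * s powr (\<nu> - \<gamma>) * \<bar>t\<bar> powr \<gamma>
        + 2 powr \<beta> * s powr (- \<beta>) * \<bar>t\<bar> powr \<beta>"
proof (cases "t \<ge> - s / 2")
  case True
  have "0 \<le> (2 + \<bar>\<nu>\<bar>) * 2 powr \<gamma> * s powr (\<nu> - \<gamma>) * \<bar>t\<bar> powr \<gamma>"
    "0 \<le> 2 powr \<beta> * s powr (- \<beta>) * \<bar>t\<bar> powr \<beta>" by simp_all
  then show ?thesis
    using small_negative_jump_remainder_bound[OF F s True t \<nu> \<gamma>(3)]
    unfolding distrib_right by linarith
next
  case False
  have "0 \<le> \<bar>\<nu> * (\<nu> - 1)\<bar> * 2 powr (2 - \<nu>) * s powr (\<nu> - \<gamma>) * \<bar>t\<bar> powr \<gamma>" by simp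
  then show ?thesis
    using large_negative_jump_remainder_bound[OF F _ _ \<gamma>(1,2) \<beta>, of s t] False s
    unfolding distrib_right by linarith
qed


section \<open>The one-step drift of a power function\<close>

lemma power_increment_decomposition:
  assumes F: "power_profile \<nu> F" and s: "s \<ge> 1"
  shows "F (s + t) - F s = \<nu> * s powr (\<nu> - 1) * t + \<nu> * (\<nu> - 1) * s powr \<nu> * taylor_rem2 \<nu> (pospart t / s)
           + (if t < 0 then F (s + t) - s powr \<nu> - \<nu> * s powr (\<nu> - 1) * t else 0)"
proof (cases "t < 0")
  case True
  then show ?thesis using F s by (simp add: power_profile_def pospart_def taylor_rem2_def)
next
  case False
  then have t: "t \<ge> 0" by simp
  have Fs: "F s = s powr \<nu>" using F s by (simp add: power_profile_def)
  have "s + t = s * (1 + t / s)" using s by (simp add: field_simps)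
  then have Fst: "F (s + t) = s powr \<nu> * (1 + t / s) powr \<nu>"
    using F s t by (simp add: power_profile_def powr_mult)
  have lin: "\<nu> * s powr (\<nu> - 1) * t = s powr \<nu> * (\<nu> * (t / s))"
    using s by (simp add: powr_diff field_simps)
  \<comment> \<open>for \<open>\<nu> \<in> {0, 1}\<close> the second order term vanishes identically, matching the junk value of \<open>taylor_rem2\<close>\<close>
  have "1 + t / s > 0" using t s by (simp add: add_pos_nonneg)
  then have "\<nu> * (\<nu> - 1) * taylor_rem2 \<nu> (t / s) = (1 + t / s) powr \<nu> - 1 - \<nu> * (t / s)"
    by (cases "\<nu> = 0 \<or> \<nu> = 1") (auto simp: taylor_rem2_def)
  then have "\<nu> * (\<nu> - 1) * s powr \<nu> * taylor_rem2 \<nu> (t / s) = s powr \<nu> * ((1 + t / s) powr \<nu> - 1 - \<nu> * (t / s))"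
    by (metis mult.assoc mult.commute)
  then show ?thesis
    unfolding Fs Fst lin using t by (simp add: pospart_def algebra_simps)
qed

lemma negpart_powr_moment_bound:
  fixes M :: "real measure" and T :: "real \<Rightarrow> real"
  assumes M: "prob_space M" and sM: "sets M = sets borel" and T[measurable]: "T \<in> borel_measurable borel"
    and moment: "(\<integral>\<^sup>+z. ennreal (negpart (T z) powr \<beta>) \<partial>M) \<le> ennreal B" and B: "B \<ge> 0"
    and \<gamma>: "0 \<le> \<gamma>" "\<gamma> \<le> \<beta>"
  shows "integrable M (\<lambda>z. negpart (T z) powr \<gamma>)" and "(\<integral>z. negpart (T z) powr \<gamma> \<partial>M) \<le> 1 + B"
proof -
  interpret prob_space M by (rule M)
  have meas: "(\<lambda>z. negpart (T z) powr p) \<in> borel_measurable M" for p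
    unfolding measurable_cong_sets[OF sM refl] by measurable
  have int_\<beta>: "integrable M (\<lambda>z. negpart (T z) powr \<beta>)"
    using moment meas by (intro integrableI_bounded) (auto simp: top.not_eq_extremum
        intro: order.strict_trans1)
  have "ennreal (\<integral>z. negpart (T z) powr \<beta> \<partial>M) \<le> ennreal B"
    using moment by (subst nn_integral_eq_integral[OF int_\<beta>, symmetric]) auto
  then have moment_\<beta>: "(\<integral>z. negpart (T z) powr \<beta> \<partial>M) \<le> B" using B by simp
  have dominated: "negpart (T z) powr \<gamma> \<le> 1 + negpart (T z) powr \<beta>" for z
  proof (cases "negpart (T z) \<le> 1")
    case True
    then have "negpart (T z) powr \<gamma> \<le> 1 powr \<gamma>"
      using \<gamma> by (intro powr_mono2) (auto simp: negpart_def)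
    then have "negpart (T z) powr \<gamma> \<le> 1" by simp
    then show ?thesis using powr_ge_zero[of "negpart (T z)" \<beta>] by linarith
  next
    case False
    then have "negpart (T z) powr \<gamma> \<le> negpart (T z) powr \<beta>" using \<gamma> by (intro powr_mono) auto
    then show ?thesis by linarith
  qed
  show int_\<gamma>: "integrable M (\<lambda>z. negpart (T z) powr \<gamma>)"
    using dominated meas by (intro Bochner_Integration.integrable_bound[OF Bochner_Integration.integrable_add[OF integrable_const[of 1] int_\<beta>]])
      auto
  have "(\<integral>z. negpart (T z) powr \<gamma> \<partial>M) \<le> (\<integral>z. 1 + negpart (T z) powr \<beta> \<partial>M)"
    using dominated int_\<gamma> int_\<beta> by (intro integral_mono) auto
  also have "\<dots> \<le> 1 + B" using int_\<beta> moment_\<beta> by (simp add: prob_space)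
  finally show "(\<integral>z. negpart (T z) powr \<gamma> \<partial>M) \<le> 1 + B" .
qed

lemma taylor_rem2_half_ge:
  assumes v: "v \<ge> 0" shows "v \<le> taylor_rem2 (1/2) v + 8"
proof -
  have "sqrt (1 + v) \<le> sqrt (((12 + v) / 4)^2)"
    using v by (intro real_sqrt_le_mono) (simp add: power2_eq_square field_simps)
  then have "sqrt (1 + v) \<le> (12 + v) / 4" using v by simp
  then show ?thesis using v by (simp add: taylor_rem2_def powr_half_sqrt field_simps)
qed

lemma integrable_pospart_of_bounded_tail:
  fixes M :: "real measure" and T :: "real \<Rightarrow> real"
  assumes \<alpha>: "1 < \<alpha>" "\<alpha> < 2" and M: "prob_space M" and sM: "sets M = sets borel"
    and T[measurable]: "T \<in> borel_measurable borel"
    and tail_bounded: "\<And>y. y > 0 \<Longrightarrow> y powr \<alpha> * measure M {z. y < T z} \<le> Mb"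
  shows "integrable M (\<lambda>z. pospart (T z))"
proof -
  interpret prob_space M by (rule M)
  have "\<bar>y powr \<alpha> * measure M {z. y < T z} - 0\<bar> \<le> Mb" if "y \<ge> 1" for y
    using tail_bounded[of y] that by simp
  then have int: "integrable M (\<lambda>z. taylor_rem2 (1/2) (pospart (T z)))"
    using tail_expectation_bound(1)[of "1/2" \<alpha> 0 M T Mb 1 Mb 1 1] \<alpha> M sM tail_bounded by simp
  show ?thesis
  proof (rule Bochner_Integration.integrable_bound[OF Bochner_Integration.integrable_add[OF int integrable_const[of 8]]])
    show "(\<lambda>z. pospart (T z)) \<in> borel_measurable M"
      unfolding measurable_cong_sets[OF sM refl] by measurable
    show "AE z in M. norm (pospart (T z)) \<le> norm (taylor_rem2 (1/2) (pospart (T z)) + 8)"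
      using taylor_rem2_half_ge taylor_rem2_nonneg[of "1/2"] by (auto simp: pospart_def)
  qed
qed

lemma positive_jump_term_bound:
  fixes M :: "real measure" and T :: "real \<Rightarrow> real"
  assumes \<alpha>: "1 < \<alpha>" "\<alpha> < 2" and \<nu>: "\<nu> < \<alpha>" and c: "c \<ge> 0"
    and M: "prob_space M" and sM: "sets M = sets borel" and T[measurable]: "T \<in> borel_measurable borel"
    and tail_bounded: "\<And>y. y > 0 \<Longrightarrow> y powr \<alpha> * measure M {z. y < T z} \<le> Mb"
    and tail_close: "\<And>y. y \<ge> Y \<Longrightarrow> \<bar>y powr \<alpha> * measure M {z. y < T z} - c\<bar> \<le> \<epsilon>"
    and s: "s > 0" and \<delta>: "\<delta> > 0" "s * \<delta> \<ge> Y"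
  defines "P \<equiv> \<lambda>z. \<nu> * (\<nu> - 1) * s powr \<nu> * taylor_rem2 \<nu> (pospart (T z) / s)"
  shows "integrable M P"
    and "\<bar>(\<integral>z. P z \<partial>M) - c * \<nu> * s powr (\<nu> - \<alpha>) * kappa0 \<alpha> \<nu>\<bar>
           \<le> s powr (\<nu> - \<alpha>) * \<bar>\<nu> * (\<nu> - 1)\<bar> *
               (\<epsilon> * tail_constant \<alpha> \<nu> + (Mb + c) * (\<delta> powr (2 - \<alpha>) / (2 - \<alpha>)))"
proof -
  have \<epsilon>: "\<epsilon> \<ge> 0" using tail_close[of "max Y 1"] by linarith
  have "measure M {z. 1 < T z} \<le> Mb" using tail_bounded[of 1] by simp
  then have Mb: "Mb \<ge> 0" using measure_nonneg[of M "{z. 1 < T z}"] by linarith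
  have "integrable M P \<and> \<bar>(\<integral>z. P z \<partial>M) - c * \<nu> * s powr (\<nu> - \<alpha>) * kappa0 \<alpha> \<nu>\<bar>
          \<le> s powr (\<nu> - \<alpha>) * \<bar>\<nu> * (\<nu> - 1)\<bar> *
              (\<epsilon> * tail_constant \<alpha> \<nu> + (Mb + c) * (\<delta> powr (2 - \<alpha>) / (2 - \<alpha>)))"
  proof (cases "\<nu> = 0 \<or> \<nu> = 1")
    case True
    then show ?thesis
      using \<epsilon> Mb c \<alpha> tail_constant_nonneg[OF \<alpha> \<nu>] by (auto simp: P_def kappa0_def)
  next
    case False
    note G = tail_expectation_bound[OF _ _ \<nu> \<alpha> c M sM T tail_bounded tail_close s \<delta>]
    define E where "E = (\<integral>z. taylor_rem2 \<nu> (pospart (T z) / s) \<partial>M)"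
    have P_eq: "(\<integral>z. P z \<partial>M) = \<nu> * (\<nu> - 1) * s powr \<nu> * E"
      unfolding P_def E_def by simp
    have "(\<integral>z. P z \<partial>M) - c * \<nu> * s powr (\<nu> - \<alpha>) * kappa0 \<alpha> \<nu>
        = s powr (\<nu> - \<alpha>) * (\<nu> * (\<nu> - 1)) * (s powr \<alpha> * E - c * tail_constant \<alpha> \<nu>)"
      using s unfolding P_eq kappa0_eq_tail_constant[OF \<alpha> \<nu>] by (simp add: powr_diff field_simps)
    then show ?thesis
      using G False by (auto simp: P_def E_def abs_mult intro!: mult_left_mono)
  qed
  then show "integrable M P"
    and "\<bar>(\<integral>z. P z \<partial>M) - c * \<nu> * s powr (\<nu> - \<alpha>) * kappa0 \<alpha> \<nu>\<bar>
           \<le> s powr (\<nu> - \<alpha>) * \<bar>\<nu> * (\<nu> - 1)\<bar> *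
               (\<epsilon> * tail_constant \<alpha> \<nu> + (Mb + c) * (\<delta> powr (2 - \<alpha>) / (2 - \<alpha>)))"
    by auto
qed

lemma negative_jump_term_bound:
  fixes M :: "real measure" and T :: "real \<Rightarrow> real"
  assumes F: "power_profile \<nu> F" and \<nu>: "\<nu> < 2"
    and M: "prob_space M" and sM: "sets M = sets borel" and T[measurable]: "T \<in> borel_measurable borel"
    and moment: "(\<integral>\<^sup>+z. ennreal (negpart (T z) powr \<beta>) \<partial>M) \<le> ennreal B" and B: "B \<ge> 0"
    and s: "s \<ge> 2" and \<gamma>: "\<nu> \<le> \<gamma>" "1 \<le> \<gamma>" "\<gamma> \<le> 2" "\<gamma> \<le> \<beta>"
  defines "N \<equiv> \<lambda>z. if T z < 0 then F (s + T z) - s powr \<nu> - \<nu> * s powr (\<nu> - 1) * T z else 0"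
    and "K \<equiv> \<bar>\<nu> * (\<nu> - 1)\<bar> * 2 powr (2 - \<nu>) + (2 + \<bar>\<nu>\<bar>) * 2 powr \<gamma>"
  shows "integrable M N"
    and "\<bar>\<integral>z. N z \<partial>M\<bar> \<le> K * s powr (\<nu> - \<gamma>) * (1 + B) + 2 powr \<beta> * s powr (- \<beta>) * (1 + B)"
proof -
  have F_meas[measurable]: "F \<in> borel_measurable borel" using F by (simp add: power_profile_def)
  note moment_\<gamma> = negpart_powr_moment_bound[OF M sM T moment B, of \<gamma>]
  note moment_\<beta> = negpart_powr_moment_bound[OF M sM T moment B, of \<beta>]
  define D where "D z = K * s powr (\<nu> - \<gamma>) * negpart (T z) powr \<gamma> + 2 powr \<beta> * s powr (- \<beta>) * negpart (T z) powr \<beta>" for z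
  have D_int: "integrable M D" unfolding D_def using moment_\<gamma> moment_\<beta> \<gamma> by simp
  have K: "K \<ge> 0" by (simp add: K_def)
  have dominated: "\<bar>N z\<bar> \<le> D z" for z
  proof (cases "T z < 0")
    case True
    then show ?thesis
      using negative_jump_remainder_bound[OF F s True \<nu> \<gamma>(1-3), of \<beta>] \<gamma>
      by (simp add: N_def D_def K_def negpart_def)
  qed (use K in \<open>simp add: N_def D_def\<close>)
  have "N \<in> borel_measurable M"
    unfolding N_def measurable_cong_sets[OF sM refl] by measurable
  with D_int show N_int: "integrable M N"
    by (rule Bochner_Integration.integrable_bound)
      (use dominated in \<open>auto intro!: AE_I2 order_trans[OF _ abs_ge_self]\<close>)
  have "\<bar>\<integral>z. N z \<partial>M\<bar> \<le> (\<integral>z. D z \<partial>M)"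
    using N_int D_int dominated by (rule integral_abs_bound_integral)
  also have "\<dots> = K * s powr (\<nu> - \<gamma>) * (\<integral>z. negpart (T z) powr \<gamma> \<partial>M)
      + 2 powr \<beta> * s powr (- \<beta>) * (\<integral>z. negpart (T z) powr \<beta> \<partial>M)"
    unfolding D_def using moment_\<gamma> moment_\<beta> \<gamma> by simp
  also have "\<dots> \<le> K * s powr (\<nu> - \<gamma>) * (1 + B) + 2 powr \<beta> * s powr (- \<beta>) * (1 + B)"
    using moment_\<gamma> moment_\<beta> \<gamma> K by (intro add_mono mult_left_mono) auto
  finally show "\<bar>\<integral>z. N z \<partial>M\<bar> \<le> K * s powr (\<nu> - \<gamma>) * (1 + B) + 2 powr \<beta> * s powr (- \<beta>) * (1 + B)" .
qed

lemma increment_expectation_bound: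
  fixes M :: "real measure" and T F :: "real \<Rightarrow> real"
  assumes F: "power_profile \<nu> F" and \<alpha>: "1 < \<alpha>" "\<alpha> < 2" and \<nu>: "\<nu> < \<alpha>" and c: "c \<ge> 0"
    and M: "prob_space M" and sM: "sets M = sets borel" and T[measurable]: "T \<in> borel_measurable borel"
    and tail_bounded: "\<And>y. y > 0 \<Longrightarrow> y powr \<alpha> * measure M {z. y < T z} \<le> Mb"
    and tail_close: "\<And>y. y \<ge> Y \<Longrightarrow> \<bar>y powr \<alpha> * measure M {z. y < T z} - c\<bar> \<le> \<epsilon>"
    and moment: "(\<integral>\<^sup>+z. ennreal (negpart (T z) powr \<beta>) \<partial>M) \<le> ennreal B" and B: "B \<ge> 0"
    and s: "s \<ge> 2" and \<delta>: "\<delta> > 0" "s * \<delta> \<ge> Y" and \<gamma>: "\<nu> \<le> \<gamma>" "1 \<le> \<gamma>" "\<gamma> \<le> 2" "\<gamma> \<le> \<beta>"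
  shows "integrable M T" and "integrable M (\<lambda>z. F (s + T z))"
    and "\<bar>(\<integral>z. F (s + T z) - F s \<partial>M) - \<nu> * s powr (\<nu> - 1) * (\<integral>z. T z \<partial>M)
            - c * \<nu> * s powr (\<nu> - \<alpha>) * kappa0 \<alpha> \<nu>\<bar>
          \<le> s powr (\<nu> - \<alpha>) * \<bar>\<nu> * (\<nu> - 1)\<bar> *
              (\<epsilon> * tail_constant \<alpha> \<nu> + (Mb + c) * (\<delta> powr (2 - \<alpha>) / (2 - \<alpha>)))
            + (\<bar>\<nu> * (\<nu> - 1)\<bar> * 2 powr (2 - \<nu>) + (2 + \<bar>\<nu>\<bar>) * 2 powr \<gamma>) * s powr (\<nu> - \<gamma>) * (1 + B)
            + 2 powr \<beta> * s powr (- \<beta>) * (1 + B)"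
proof -
  interpret prob_space M by (rule M)
  define P where "P z = \<nu> * (\<nu> - 1) * s powr \<nu> * taylor_rem2 \<nu> (pospart (T z) / s)" for z
  define N where "N z = (if T z < 0 then F (s + T z) - s powr \<nu> - \<nu> * s powr (\<nu> - 1) * T z else 0)" for z
  note pos = positive_jump_term_bound[OF \<alpha> \<nu> c M sM T tail_bounded tail_close _ \<delta>, folded P_def]
  note neg = negative_jump_term_bound[OF F _ M sM T moment B s \<gamma>, folded N_def]
  have "integrable M (\<lambda>z. pospart (T z) - negpart (T z) powr 1)"
    using integrable_pospart_of_bounded_tail[OF \<alpha> M sM T tail_bounded]
      negpart_powr_moment_bound(1)[OF M sM T moment B, of 1] \<gamma> by simp
  moreover have "pospart (T z) - negpart (T z) powr 1 = T z" for z
    by (cases "T z < 0") (auto simp: pospart_def negpart_def)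
  ultimately show T_int: "integrable M T" by simp
  have increment: "F (s + T z) - F s = \<nu> * s powr (\<nu> - 1) * T z + P z + N z" for z
    using power_increment_decomposition[OF F, of s "T z"] s by (simp add: P_def N_def)
  have "integrable M (\<lambda>z. \<nu> * s powr (\<nu> - 1) * T z + P z + N z)"
    using T_int pos(1) neg(1) \<nu> \<alpha> s by auto
  then have int: "integrable M (\<lambda>z. F (s + T z) - F s)"
    by (simp add: increment)
  then show "integrable M (\<lambda>z. F (s + T z))"
    using Bochner_Integration.integrable_add[OF int integrable_const[of "F s"]] by simp
  have "(\<integral>z. F (s + T z) - F s \<partial>M) - \<nu> * s powr (\<nu> - 1) * (\<integral>z. T z \<partial>M)
          - c * \<nu> * s powr (\<nu> - \<alpha>) * kappa0 \<alpha> \<nu>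
      = ((\<integral>z. P z \<partial>M) - c * \<nu> * s powr (\<nu> - \<alpha>) * kappa0 \<alpha> \<nu>) + (\<integral>z. N z \<partial>M)"
    unfolding increment using T_int pos(1) neg(1) \<nu> \<alpha> s by simp
  then show "\<bar>(\<integral>z. F (s + T z) - F s \<partial>M) - \<nu> * s powr (\<nu> - 1) * (\<integral>z. T z \<partial>M)
            - c * \<nu> * s powr (\<nu> - \<alpha>) * kappa0 \<alpha> \<nu>\<bar>
          \<le> s powr (\<nu> - \<alpha>) * \<bar>\<nu> * (\<nu> - 1)\<bar> *
              (\<epsilon> * tail_constant \<alpha> \<nu> + (Mb + c) * (\<delta> powr (2 - \<alpha>) / (2 - \<alpha>)))
            + (\<bar>\<nu> * (\<nu> - 1)\<bar> * 2 powr (2 - \<nu>) + (2 + \<bar>\<nu>\<bar>) * 2 powr \<gamma>) * s powr (\<nu> - \<gamma>) * (1 + B)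
            + 2 powr \<beta> * s powr (- \<beta>) * (1 + B)"
    using pos(2) neg(2) \<nu> \<alpha> s by linarith
qed

lemma small_cutoff_exists:
  fixes A L C \<epsilon> :: real
  assumes "\<alpha> < 2" "\<epsilon> > 0"
  shows "\<exists>\<eta>>0. A * (\<eta> * L + C * (\<eta> powr (2 - \<alpha>) / (2 - \<alpha>))) < \<epsilon>"
proof -
  have "\<forall>\<^sub>F \<eta> in at_right (0::real). 0 \<le> \<eta>"
    using eventually_at_right_less[of "0::real"] by (auto elim: eventually_mono)
  then have "((\<lambda>\<eta>. A * (\<eta> * L + C * (\<eta> powr (2 - \<alpha>) / (2 - \<alpha>)))) \<longlongrightarrow>
          A * (0 * L + C * (0 powr (2 - \<alpha>) / (2 - \<alpha>)))) (at_right 0)"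
    using assms by (intro tendsto_intros) auto
  then have "\<forall>\<^sub>F \<eta> in at_right 0. A * (\<eta> * L + C * (\<eta> powr (2 - \<alpha>) / (2 - \<alpha>))) < \<epsilon>"
    using assms by (intro order_tendstoD(2)) auto
  then have "\<forall>\<^sub>F \<eta> in at_right 0. \<eta> > 0 \<and> A * (\<eta> * L + C * (\<eta> powr (2 - \<alpha>) / (2 - \<alpha>))) < \<epsilon>"
    by (intro eventually_conj eventually_at_right_less)
  then show ?thesis using eventually_happens by force
qed

lemma uniform_tail_bounded:
  fixes M :: "'i \<Rightarrow> real measure" and T :: "'i \<Rightarrow> real \<Rightarrow> real"
  assumes \<alpha>: "\<alpha> > 0" and M: "\<And>i. i \<in> I \<Longrightarrow> prob_space (M i)"
    and tail: "\<And>e. e > 0 \<Longrightarrow> \<exists>Y. \<forall>y\<ge>Y. \<forall>i\<in>I. \<bar>y powr \<alpha> * measure (M i) {z. y < T i z} - c\<bar> \<le> e"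
  shows "\<exists>Mb. \<forall>y>0. \<forall>i\<in>I. y powr \<alpha> * measure (M i) {z. y < T i z} \<le> Mb"
proof -
  obtain Y where Y: "\<And>y i. y \<ge> Y \<Longrightarrow> i \<in> I \<Longrightarrow> \<bar>y powr \<alpha> * measure (M i) {z. y < T i z} - c\<bar> \<le> 1"
    using tail[of 1] by auto
  have "y powr \<alpha> * measure (M i) {z. y < T i z} \<le> \<bar>c\<bar> + 1 + max Y 1 powr \<alpha>" if "y > 0" "i \<in> I" for y i
  proof (cases "y \<ge> Y")
    case True
    then show ?thesis using Y[OF True that(2)] powr_ge_zero[of "max Y 1" \<alpha>] by linarith
  next
    case False
    interpret prob_space "M i" using M[OF that(2)] .
    have "y powr \<alpha> * measure (M i) {z. y < T i z} \<le> y powr \<alpha>"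
      using mult_left_mono[OF prob_le_1, of "y powr \<alpha>"] by simp
    also have "\<dots> \<le> max Y 1 powr \<alpha>" using False that \<alpha> by (intro powr_mono2) auto
    finally show ?thesis by linarith
  qed
  then show ?thesis by blast
qed

lemma increment_expectation_asymptotic:
  fixes I :: "'i set" and M :: "'i \<Rightarrow> real measure" and T :: "'i \<Rightarrow> real \<Rightarrow> real" and s :: "'i \<Rightarrow> real"
  assumes F: "power_profile \<nu> F" and \<alpha>: "1 < \<alpha>" "\<alpha> < 2" and \<beta>: "\<alpha> < \<beta>" and c: "c \<ge> 0"
    and \<nu>: "\<alpha> - \<beta> < \<nu>" "\<nu> < \<alpha>"
    and M: "\<And>i. i \<in> I \<Longrightarrow> prob_space (M i)" and sM: "\<And>i. i \<in> I \<Longrightarrow> sets (M i) = sets borel"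
    and T: "\<And>i. i \<in> I \<Longrightarrow> T i \<in> borel_measurable borel"
    and tail: "\<And>e. e > 0 \<Longrightarrow> \<exists>Y. \<forall>y\<ge>Y. \<forall>i\<in>I. \<bar>y powr \<alpha> * measure (M i) {z. y < T i z} - c\<bar> \<le> e"
    and moment: "\<And>i. i \<in> I \<Longrightarrow> (\<integral>\<^sup>+z. ennreal (negpart (T i z) powr \<beta>) \<partial>M i) \<le> ennreal B"
    and B: "B \<ge> 0" and \<epsilon>: "\<epsilon> > 0"
  shows "\<exists>S. \<forall>i\<in>I. s i \<ge> S \<longrightarrow>
    \<bar>(\<integral>z. F (s i + T i z) - F (s i) \<partial>M i) - \<nu> * s i powr (\<nu> - 1) * (\<integral>z. T i z \<partial>M i)
       - c * \<nu> * s i powr (\<nu> - \<alpha>) * kappa0 \<alpha> \<nu>\<bar> \<le> \<epsilon> * s i powr (\<nu> - \<alpha>)"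
proof -
  have "\<exists>Mb. \<forall>y>0. \<forall>i\<in>I. y powr \<alpha> * measure (M i) {z. y < T i z} \<le> Mb"
    using \<alpha>(1) by (intro uniform_tail_bounded[OF _ M tail]) simp
  then obtain Mb where tail_bounded: "\<And>y i. y > 0 \<Longrightarrow> i \<in> I \<Longrightarrow> y powr \<alpha> * measure (M i) {z. y < T i z} \<le> Mb"
    by blast
  define \<gamma> where "\<gamma> = min \<beta> 2"
  have \<gamma>: "\<nu> \<le> \<gamma>" "1 \<le> \<gamma>" "\<gamma> \<le> 2" "\<gamma> \<le> \<beta>" "\<alpha> < \<gamma>" using \<alpha> \<beta> \<nu> by (auto simp: \<gamma>_def)
  define A where "A = \<bar>\<nu> * (\<nu> - 1)\<bar>"
  define K where "K = \<bar>\<nu> * (\<nu> - 1)\<bar> * 2 powr (2 - \<nu>) + (2 + \<bar>\<nu>\<bar>) * 2 powr \<gamma>"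
  \<comment> \<open>the scale \<open>\<eta>\<close> serves both as the tail accuracy and as the cut-off \<open>\<delta>\<close> of the weight near \<open>0\<close>\<close>
  obtain \<eta> where \<eta>: "\<eta> > 0"
    and \<eta>_small: "A * (\<eta> * tail_constant \<alpha> \<nu> + (Mb + c) * (\<eta> powr (2 - \<alpha>) / (2 - \<alpha>))) < \<epsilon> / 2"
    using small_cutoff_exists[of \<alpha> "\<epsilon> / 2" A "tail_constant \<alpha> \<nu>" "Mb + c"] \<alpha> \<epsilon> by auto
  obtain Y where Y: "\<And>y i. y \<ge> Y \<Longrightarrow> i \<in> I \<Longrightarrow> \<bar>y powr \<alpha> * measure (M i) {z. y < T i z} - c\<bar> \<le> \<eta>"
    using tail[OF \<eta>] by auto
  have "((\<lambda>t. K * (1 + B) * t powr (\<alpha> - \<gamma>) + 2 powr \<beta> * (1 + B) * t powr (\<alpha> - \<beta> - \<nu>)) \<longlongrightarrow> 0) at_top"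
    using \<gamma> \<nu> by (intro tendsto_add_zero tendsto_mult_right_zero tendsto_neg_powr filterlim_ident) auto
  then have "\<forall>\<^sub>F t in at_top. K * (1 + B) * t powr (\<alpha> - \<gamma>) + 2 powr \<beta> * (1 + B) * t powr (\<alpha> - \<beta> - \<nu>) < \<epsilon> / 2"
    using \<epsilon> by (intro order_tendstoD(2)) auto
  then obtain S0 where S0: "\<And>t. t \<ge> S0 \<Longrightarrow> K * (1 + B) * t powr (\<alpha> - \<gamma>) + 2 powr \<beta> * (1 + B) * t powr (\<alpha> - \<beta> - \<nu>) < \<epsilon> / 2"
    unfolding eventually_at_top_linorder by blast
  show ?thesis
  proof (intro exI[of _ "max (max 2 (Y / \<eta>)) S0"] ballI impI)
    fix i assume i: "i \<in> I" and "max (max 2 (Y / \<eta>)) S0 \<le> s i"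
    then have s: "s i \<ge> 2" "s i * \<eta> \<ge> Y" "s i \<ge> S0" using \<eta> by (auto simp: field_simps)
    have "K * s i powr (\<nu> - \<gamma>) * (1 + B) + 2 powr \<beta> * s i powr (- \<beta>) * (1 + B)
        = s i powr (\<nu> - \<alpha>) * (K * (1 + B) * s i powr (\<alpha> - \<gamma>) + 2 powr \<beta> * (1 + B) * s i powr (\<alpha> - \<beta> - \<nu>))"
      by (simp add: powr_add[symmetric] algebra_simps)
    also have "\<dots> \<le> s i powr (\<nu> - \<alpha>) * (\<epsilon> / 2)"
      using S0[OF s(3)] by (intro mult_left_mono) auto
    finally have remainder: "K * s i powr (\<nu> - \<gamma>) * (1 + B) + 2 powr \<beta> * s i powr (- \<beta>) * (1 + B)
        \<le> s i powr (\<nu> - \<alpha>) * (\<epsilon> / 2)" .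
    have "s i powr (\<nu> - \<alpha>) * A * (\<eta> * tail_constant \<alpha> \<nu> + (Mb + c) * (\<eta> powr (2 - \<alpha>) / (2 - \<alpha>)))
        \<le> s i powr (\<nu> - \<alpha>) * (\<epsilon> / 2)"
      using \<eta>_small by (simp add: mult.assoc mult_left_mono)
    moreover have "s i powr (\<nu> - \<alpha>) * (\<epsilon> / 2) + s i powr (\<nu> - \<alpha>) * (\<epsilon> / 2) = \<epsilon> * s i powr (\<nu> - \<alpha>)"
      by simp
    ultimately show "\<bar>(\<integral>z. F (s i + T i z) - F (s i) \<partial>M i) - \<nu> * s i powr (\<nu> - 1) * (\<integral>z. T i z \<partial>M i)
       - c * \<nu> * s i powr (\<nu> - \<alpha>) * kappa0 \<alpha> \<nu>\<bar> \<le> \<epsilon> * s i powr (\<nu> - \<alpha>)"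
      using increment_expectation_bound(3)[OF F \<alpha> \<nu>(2) c M[OF i] sM[OF i] T[OF i]
          tail_bounded[OF _ i] Y[OF _ i] moment[OF i] B s(1) \<eta> s(2) \<gamma>(1-4)] remainder
      unfolding A_def K_def by linarith
  qed
qed

lemma smallo_of_uniform_bound:
  fixes g s :: "'a \<Rightarrow> real"
  assumes bound: "\<And>\<epsilon>. \<epsilon> > 0 \<Longrightarrow> \<exists>S. \<forall>x\<in>I. s x \<ge> S \<longrightarrow> \<bar>g x\<bar> \<le> \<epsilon> * s x powr p"
    and lim: "filterlim s at_top F" and I: "eventually (\<lambda>x. x \<in> I) F"
  shows "g \<in> o[F](\<lambda>x. s x powr p)"
proof (rule landau_o.smallI)
  fix \<epsilon> :: real assume "\<epsilon> > 0"
  then obtain S where S: "\<And>x. x \<in> I \<Longrightarrow> s x \<ge> S \<Longrightarrow> \<bar>g x\<bar> \<le> \<epsilon> * s x powr p"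
    using bound by blast
  from I filterlim_at_top_dense[THEN iffD1, OF lim, rule_format, of S]
  show "\<forall>\<^sub>F x in F. norm (g x) \<le> \<epsilon> * norm (s x powr p)"
    by eventually_elim (use S in auto)
qed

lemma T_out_right_expansion:
  assumes K: "markov_kernel_on X K" and T_out: "T_out X K \<alpha> \<beta> c"
    and \<nu>: "\<alpha> - \<beta> < \<nu>" "\<nu> < \<alpha>" and F: "power_profile \<nu> F"
  shows "(\<lambda>x. (\<integral>z. F z - F x \<partial>K x) - \<nu> * x powr (\<nu> - 1) * drift K x - c * \<nu> * x powr (\<nu> - \<alpha>) * kappa0 \<alpha> \<nu>)
           \<in> o[at_top \<sqinter> principal X](\<lambda>x. x powr (\<nu> - \<alpha>))"
proof -
  obtain x0 B where \<alpha>: "1 < \<alpha>" "\<alpha> < 2" and \<beta>: "\<alpha> < \<beta>" and c: "c > 0"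
    and tail: "\<And>e. e > 0 \<Longrightarrow> \<forall>\<^sub>F y in at_top. \<forall>x\<in>X. x \<ge> x0 \<longrightarrow>
                 \<bar>y powr \<alpha> * measure (K x) {z. pospart (z - x) > y} - c\<bar> \<le> e"
    and moment: "\<And>x. x \<in> X \<Longrightarrow> x \<ge> x0 \<Longrightarrow>
                   (\<integral>\<^sup>+z. ennreal (negpart (z - x) powr \<beta>) \<partial>K x) \<le> ennreal B"
    using T_out unfolding T_out_def by blast
  define I where "I = {x \<in> X. x \<ge> x0}"
  have "\<exists>Y. \<forall>y\<ge>Y. \<forall>x\<in>I. \<bar>y powr \<alpha> * measure (K x) {z. y < z - x} - c\<bar> \<le> e" if e: "e > 0" for e
  proof -
    obtain Y where Y: "\<And>y. y \<ge> Y \<Longrightarrow> \<forall>x\<in>X. x \<ge> x0 \<longrightarrow>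
        \<bar>y powr \<alpha> * measure (K x) {z. pospart (z - x) > y} - c\<bar> \<le> e"
      using tail[OF e] unfolding eventually_at_top_linorder by blast
    have tail_set: "y \<ge> 0 \<Longrightarrow> {z. pospart (z - x) > y} = {z. y < z - x}" for x y
      by (auto simp: pospart_def)
    show ?thesis
    proof (intro exI[of _ "max Y 0"] allI impI ballI)
      fix y x assume "max Y 0 \<le> y" "x \<in> I"
      then show "\<bar>y powr \<alpha> * measure (K x) {z. y < z - x} - c\<bar> \<le> e"
        using Y[of y] tail_set[of y x] by (auto simp: I_def)
    qed
  qed
  moreover have "(\<integral>\<^sup>+z. ennreal (negpart (z - x) powr \<beta>) \<partial>K x) \<le> ennreal (max B 0)" if "x \<in> I" for x
    using moment[of x] that by (auto simp: I_def intro: order_trans ennreal_leI)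
  ultimately have "\<exists>S. \<forall>x\<in>I. x \<ge> S \<longrightarrow>
      \<bar>(\<integral>z. F (x + (z - x)) - F x \<partial>K x) - \<nu> * x powr (\<nu> - 1) * (\<integral>z. z - x \<partial>K x)
         - c * \<nu> * x powr (\<nu> - \<alpha>) * kappa0 \<alpha> \<nu>\<bar> \<le> e * x powr (\<nu> - \<alpha>)" if "e > 0" for e
    using K that increment_expectation_asymptotic[OF F \<alpha> \<beta> _ \<nu>, of c I K "\<lambda>x z. z - x" "max B 0" e "\<lambda>x. x"] c
    by (auto simp: I_def markov_kernel_on_def)
  then show ?thesis
    by (intro smallo_of_uniform_bound[where I = I])
      (auto simp: drift_def I_def eventually_inf_principal eventually_at_top_linorder
        intro: filterlim_mono[OF filterlim_ident order_refl inf_le1])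
qed

lemma T_out_left_expansion:
  assumes K: "markov_kernel_on X K" and T_out: "T_out X K \<alpha> \<beta> c"
    and \<nu>: "\<alpha> - \<beta> < \<nu>" "\<nu> < \<alpha>"
  shows "(\<lambda>x. D2 K \<nu> x + \<nu> * (- x) powr (\<nu> - 1) * drift K x - c * \<nu> * (- x) powr (\<nu> - \<alpha>) * kappa0 \<alpha> \<nu>)
           \<in> o[at_bot \<sqinter> principal X](\<lambda>x. (- x) powr (\<nu> - \<alpha>))"
proof -
  obtain x0 B where \<alpha>: "1 < \<alpha>" "\<alpha> < 2" and \<beta>: "\<alpha> < \<beta>" and c: "c > 0"
    and tail: "\<And>e. e > 0 \<Longrightarrow> \<forall>\<^sub>F y in at_top. \<forall>x\<in>X. x \<le> - x0 \<longrightarrow>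
                 \<bar>y powr \<alpha> * measure (K x) {z. negpart (z - x) > y} - c\<bar> \<le> e"
    and moment: "\<And>x. x \<in> X \<Longrightarrow> x \<le> - x0 \<Longrightarrow>
                   (\<integral>\<^sup>+z. ennreal (pospart (z - x) powr \<beta>) \<partial>K x) \<le> ennreal B"
    using T_out unfolding T_out_def by blast
  define I where "I = {x \<in> X. x \<le> - x0}"
  have "\<exists>Y. \<forall>y\<ge>Y. \<forall>x\<in>I. \<bar>y powr \<alpha> * measure (K x) {z. y < x - z} - c\<bar> \<le> e" if e: "e > 0" for e
  proof -
    obtain Y where Y: "\<And>y. y \<ge> Y \<Longrightarrow> \<forall>x\<in>X. x \<le> - x0 \<longrightarrow>
        \<bar>y powr \<alpha> * measure (K x) {z. negpart (z - x) > y} - c\<bar> \<le> e"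
      using tail[OF e] unfolding eventually_at_top_linorder by blast
    have tail_set: "y \<ge> 0 \<Longrightarrow> {z. negpart (z - x) > y} = {z. y < x - z}" for x y
      by (auto simp: negpart_def)
    show ?thesis
    proof (intro exI[of _ "max Y 0"] allI impI ballI)
      fix y x assume "max Y 0 \<le> y" "x \<in> I"
      then show "\<bar>y powr \<alpha> * measure (K x) {z. y < x - z} - c\<bar> \<le> e"
        using Y[of y] tail_set[of y x] by (auto simp: I_def)
    qed
  qed
  moreover have "(\<integral>\<^sup>+z. ennreal (negpart (x - z) powr \<beta>) \<partial>K x) \<le> ennreal (max B 0)" if "x \<in> I" for x
  proof -
    have "negpart (x - z) = pospart (z - x)" for z by (simp add: negpart_def pospart_def)
    then show ?thesis using moment[of x] that by (auto simp: I_def intro: order_trans ennreal_leI)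
  qed
  ultimately have "\<exists>S. \<forall>x\<in>I. - x \<ge> S \<longrightarrow>
      \<bar>(\<integral>z. f2 \<nu> (- x + (x - z)) - f2 \<nu> (- x) \<partial>K x) - \<nu> * (- x) powr (\<nu> - 1) * (\<integral>z. x - z \<partial>K x)
         - c * \<nu> * (- x) powr (\<nu> - \<alpha>) * kappa0 \<alpha> \<nu>\<bar> \<le> e * (- x) powr (\<nu> - \<alpha>)" if "e > 0" for e
    using K that c increment_expectation_asymptotic[OF power_profile_f2 \<alpha> \<beta> _ \<nu>,
        of c I K "\<lambda>x z. x - z" "max B 0" e uminus]
    by (auto simp: I_def markov_kernel_on_def)
  moreover have "f2 \<nu> (- y) = f2 \<nu> y" for y by (simp add: f2_def)
  moreover have "(\<integral>z. x - z \<partial>K x) = - drift K x" for x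
    unfolding drift_def by (subst integral_minus[symmetric]) simp
  ultimately show ?thesis
    by (intro smallo_of_uniform_bound[where I = I])
      (auto simp: D2_def I_def eventually_inf_principal eventually_at_bot_linorder
        intro: filterlim_mono[OF filterlim_uminus_at_top_at_bot order_refl inf_le1])
qed

theorem lemma4p3:
  fixes X :: "real set" and K :: "real \<Rightarrow> real measure"
    and \<alpha> \<beta> c \<nu> :: real
  assumes "markov_kernel_on X K"
    and "T_out X K \<alpha> \<beta> c"
    and "\<alpha> - \<beta> < \<nu>" and "\<nu> < \<alpha>"
  shows "((\<lambda>x. D1 K \<nu> x - \<nu> * x powr (\<nu> - 1) * drift K x
              - c * \<nu> * x powr (\<nu> - \<alpha>) * kappa0 \<alpha> \<nu>)
           \<in> o[at_top \<sqinter> principal X](\<lambda>x. x powr (\<nu> - \<alpha>))) \<and>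
         ((\<lambda>x. D2 K \<nu> x - \<nu> * sgn x * \<bar>x\<bar> powr (\<nu> - 1) * drift K x
              - c * \<nu> * \<bar>x\<bar> powr (\<nu> - \<alpha>) * kappa0 \<alpha> \<nu>)
           \<in> o[at_infinity \<sqinter> principal X](\<lambda>x. \<bar>x\<bar> powr (\<nu> - \<alpha>)))"
    (is "?right \<and> (?g \<in> o[_](?h))")
proof
  note right = T_out_right_expansion[OF assms]
  show ?right using right[OF power_profile_f1] by (simp add: D1_def)
  have pos: "\<forall>\<^sub>F x in at_top \<sqinter> principal X. x > 0" and neg: "\<forall>\<^sub>F x in at_bot \<sqinter> principal X. x < 0"
    by (auto simp: eventually_inf_principal eventually_at_top_dense eventually_at_bot_dense)
  have g_top: "\<forall>\<^sub>F x in at_top \<sqinter> principal X. ?g x = (\<integral>z. f2 \<nu> z - f2 \<nu> x \<partial>K x)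
          - \<nu> * x powr (\<nu> - 1) * drift K x - c * \<nu> * x powr (\<nu> - \<alpha>) * kappa0 \<alpha> \<nu>"
    and h_top: "\<forall>\<^sub>F x in at_top \<sqinter> principal X. ?h x = x powr (\<nu> - \<alpha>)"
    using pos by (auto elim!: eventually_mono simp: D2_def)
  have g_bot: "\<forall>\<^sub>F x in at_bot \<sqinter> principal X. ?g x = D2 K \<nu> x + \<nu> * (- x) powr (\<nu> - 1) * drift K x
          - c * \<nu> * (- x) powr (\<nu> - \<alpha>) * kappa0 \<alpha> \<nu>"
    and h_bot: "\<forall>\<^sub>F x in at_bot \<sqinter> principal X. ?h x = (- x) powr (\<nu> - \<alpha>)"
    using neg by (auto elim!: eventually_mono)
  have "?g \<in> o[at_top \<sqinter> principal X](?h)"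
    unfolding landau_o.small.in_cong[OF g_top] landau_o.small.cong[OF h_top]
    by (rule right[OF power_profile_f2])
  moreover have "?g \<in> o[at_bot \<sqinter> principal X](?h)"
    unfolding landau_o.small.in_cong[OF g_bot] landau_o.small.cong[OF h_bot]
    by (rule T_out_left_expansion[OF assms])
  ultimately show "?g \<in> o[at_infinity \<sqinter> principal X](?h)"
    by (simp add: at_infinity_eq_at_top_bot inf_sup_distrib2 landau_o.small.sup)
qed

end
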